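(* Let $\Omega\subset\mathbb R^N$ be bounded and open, and $u\in\widetilde W^{s,p}(\Omega)\cap C^{1,\gamma}_{loc}(\Omega)$ with $\gamma\in[0,1]$ satisfying $$\gamma>1-p(1-s)\ \text{ if }p\ge2,\qquad \gamma>\frac{1-p(1-s)}{p-1}\ \text{ if }1<p<2.$$ Then there is $f\in L^\infty_{loc}(\Omega)$ such that $u$ is a strong solution of $(-\Delta)^s_pu=f$ in $\Omega$.
   Context: Fixed $s\in(0,1)$, $p\in(1,\infty)$. $a^q:=|a|^{q-1}a$. $\widetilde W^{s,p}(\Omega)$: $u\in L^p_{loc}(\mathbb R^N)$ with $u\in W^{s,p}(U)$ for some bounded open $U\supset\overline\Omega$ and $\int_{\mathbb R^N}\frac{|u|^{p-1}}{(1+|x|)^{N+ps}}dx<\infty$. Strong solution: $2\int_{\mathbb R^N\setminus B_\varepsilon(x)}\frac{(u(x)-u(y))^{p-1}}{|x-y|^{N+ps}}dy\to f$ in $L^1_{loc}(\Omega)$ as $\varepsilon\to0^+$. *)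

theory Defs
  imports "HOL-Analysis.Analysis"
begin

definition spow :: "real \<Rightarrow> real \<Rightarrow> real" where
  "spow a q = \<bar>a\<bar> powr (q - 1) * a"

definition in_Wsp :: "real \<Rightarrow> real \<Rightarrow> 'a::euclidean_space set \<Rightarrow> ('a \<Rightarrow> real) \<Rightarrow> bool" where
  "in_Wsp s p U u \<longleftrightarrow>
     set_borel_measurable lebesgue U u \<and>
     (\<integral>\<^sup>+ x. ennreal (indicator U x * \<bar>u x\<bar> powr p) \<partial>lebesgue) < \<infinity> \<and>
     (\<integral>\<^sup>+ z. ennreal (indicator (U \<times> U) z *
          (\<bar>u (fst z) - u (snd z)\<bar> powr p / norm (fst z - snd z) powr (real DIM('a) + p * s)))
        \<partial>(lebesgue \<Otimes>\<^sub>M lebesgue)) < \<infinity>"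

definition in_Lp_loc :: "real \<Rightarrow> ('a::euclidean_space \<Rightarrow> real) \<Rightarrow> bool" where
  "in_Lp_loc p u \<longleftrightarrow> u \<in> borel_measurable lebesgue \<and>
     (\<forall>K. compact K \<longrightarrow> (\<integral>\<^sup>+ x. ennreal (indicator K x * \<bar>u x\<bar> powr p) \<partial>lebesgue) < \<infinity>)"

definition in_tWsp :: "real \<Rightarrow> real \<Rightarrow> 'a::euclidean_space set \<Rightarrow> ('a \<Rightarrow> real) \<Rightarrow> bool" where
  "in_tWsp s p \<Omega> u \<longleftrightarrow> in_Lp_loc p u \<and>
     (\<exists>U. bounded U \<and> open U \<and> closure \<Omega> \<subseteq> U \<and> in_Wsp s p U u) \<and>
     (\<integral>\<^sup>+ x. ennreal (\<bar>u x\<bar> powr (p - 1) / (1 + norm x) powr (real DIM('a) + p * s)) \<partial>lebesgue) < \<infinity>"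

definition in_C1gamma_loc :: "real \<Rightarrow> 'a::euclidean_space set \<Rightarrow> ('a \<Rightarrow> real) \<Rightarrow> bool" where
  "in_C1gamma_loc \<gamma> \<Omega> u \<longleftrightarrow>
     (\<exists>Du :: 'a \<Rightarrow> 'a.
        (\<forall>x\<in>\<Omega>. (u has_derivative (\<lambda>h. Du x \<bullet> h)) (at x)) \<and>
        continuous_on \<Omega> Du \<and>
        (\<forall>K. compact K \<and> K \<subseteq> \<Omega> \<longrightarrow>
           (\<exists>C. \<forall>x\<in>K. \<forall>y\<in>K. norm (Du x - Du y) \<le> C * norm (x - y) powr \<gamma>)))"

definition in_Linf_loc :: "'a::euclidean_space set \<Rightarrow> ('a \<Rightarrow> real) \<Rightarrow> bool" where
  "in_Linf_loc \<Omega> f \<longleftrightarrow> set_borel_measurable lebesgue \<Omega> f \<and>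
     (\<forall>K. compact K \<and> K \<subseteq> \<Omega> \<longrightarrow> (\<exists>C. AE x in lebesgue. x \<in> K \<longrightarrow> \<bar>f x\<bar> \<le> C))"

definition frac_trunc :: "real \<Rightarrow> real \<Rightarrow> ('a::euclidean_space \<Rightarrow> real) \<Rightarrow> real \<Rightarrow> 'a \<Rightarrow> real" where
  "frac_trunc s p u \<epsilon> x = 2 * (\<integral>y. indicator (- ball x \<epsilon>) y *
       (spow (u x - u y) (p - 1) / norm (x - y) powr (real DIM('a) + p * s)) \<partial>lebesgue)"

definition strong_solution :: "real \<Rightarrow> real \<Rightarrow> 'a::euclidean_space set \<Rightarrow> ('a \<Rightarrow> real) \<Rightarrow> ('a \<Rightarrow> real) \<Rightarrow> bool" where
  "strong_solution s p \<Omega> u f \<longleftrightarrow>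
     (\<forall>K. compact K \<and> K \<subseteq> \<Omega> \<longrightarrow>
        (\<forall>\<^sub>F \<epsilon> in at_right 0. set_integrable lebesgue K (\<lambda>x. frac_trunc s p u \<epsilon> x - f x)) \<and>
        ((\<lambda>\<epsilon>. \<integral>x. indicator K x * \<bar>frac_trunc s p u \<epsilon> x - f x\<bar> \<partial>lebesgue) \<longlongrightarrow> 0) (at_right 0))"

end

theory Submission
  imports Defs
begin

text \<open>
  Between two radii \<open>\<epsilon>' < \<epsilon>\<close> the truncated operators at \<open>x\<close> differ by an integral over the
  annulus \<open>\<epsilon>' \<le> |y - x| < \<epsilon>\<close>, and symmetrising it under the point reflection \<open>y \<mapsto> 2x - y\<close>
  turns the integrand into \<open>((u(x) - u(x + h))\<^bsup>p-1\<^esup> + (u(x) - u(x - h))\<^bsup>p-1\<^esup>) / |h|\<^bsup>N+ps\<^esup>\<close>.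
  A first-order Taylor expansion with \<open>\<gamma>\<close>-Hoelder gradient bounds the numerator by \<open>C |h|\<^bsup>\<theta>\<^esup>\<close>,
  where \<open>\<theta> = p - 1 + \<gamma>\<close> for \<open>p \<ge> 2\<close> and \<open>\<theta> = (p - 1)(1 + \<gamma>)\<close> for \<open>p < 2\<close>; the hypothesis on
  \<open>\<gamma>\<close> says exactly that \<open>\<theta> > ps\<close>.  Hence the truncations are Cauchy as \<open>\<epsilon> \<rightarrow> 0\<close>, uniformly on
  compact subsets of \<open>\<Omega>\<close>, with rate \<open>\<epsilon>\<^bsup>\<theta>-ps\<^esup>\<close>.  The limit \<open>f\<close> is locally bounded because
  each truncation is (its tail is controlled by the weighted \<open>L\<^sup>p\<^sup>-\<^sup>1\<close> integrability of \<open>u\<close>),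
  and uniform convergence on compact sets gives the convergence in \<open>L\<^sup>1\<^sub>l\<^sub>o\<^sub>c\<close>.
\<close>

section \<open>Integrals of powers of the distance to a point\<close>

lemma nn_integral_dist_powr_annulus_le:
  fixes x :: "'a::euclidean_space" and r \<beta> :: real
  assumes "r > 0"
  shows "(\<integral>\<^sup>+y. ennreal (indicator {y. r \<le> dist x y \<and> dist x y < 2*r} y * dist x y powr \<beta>) \<partial>lebesgue)
     \<le> ennreal (unit_ball_vol DIM('a) * 2 ^ DIM('a) * 2 powr \<bar>\<beta>\<bar> * r powr (DIM('a) + \<beta>))"
proof -
  have "dist x y powr \<beta> \<le> 2 powr \<bar>\<beta>\<bar> * r powr \<beta>" if "r \<le> dist x y" "dist x y < 2*r" for y
  proof (cases "\<beta> \<ge> 0")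
    case True
    have "dist x y powr \<beta> \<le> (2*r) powr \<beta>" using that assms True by (intro powr_mono2) auto
    then show ?thesis using True assms by (simp add: powr_mult)
  next
    case False
    have "dist x y powr \<beta> \<le> r powr \<beta>" using that assms False by (intro powr_mono2') auto
    moreover have "1 \<le> 2 powr \<bar>\<beta>\<bar>" by (rule ge_one_powr_ge_zero) auto
    ultimately show ?thesis using mult_right_mono[of 1 "2 powr \<bar>\<beta>\<bar>" "r powr \<beta>"] by simp
  qed
  then have "ennreal (indicator {y. r \<le> dist x y \<and> dist x y < 2*r} y * dist x y powr \<beta>)
      \<le> ennreal (2 powr \<bar>\<beta>\<bar> * r powr \<beta>) * indicator (ball x (2*r)) y" for y
    by (auto simp: indicator_def intro!: ennreal_leI)
  then have "(\<integral>\<^sup>+y. ennreal (indicator {y. r \<le> dist x y \<and> dist x y < 2*r} y * dist x y powr \<beta>) \<partial>lebesgue)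
      \<le> ennreal (2 powr \<bar>\<beta>\<bar> * r powr \<beta>) * emeasure lebesgue (ball x (2*r))"
    by (subst nn_integral_cmult_indicator[symmetric]) (auto intro!: nn_integral_mono)
  also have "\<dots> = ennreal (unit_ball_vol DIM('a) * 2 ^ DIM('a) * 2 powr \<bar>\<beta>\<bar> * r powr (DIM('a) + \<beta>))"
    using assms by (simp add: emeasure_ball ennreal_mult'[symmetric] powr_add powr_realpow
        power_mult_distrib mult_ac)
  finally show ?thesis .
qed

lemma nn_integral_dist_powr_le_annuli:
  fixes x :: "'a::euclidean_space" and r :: "nat \<Rightarrow> real" and \<beta> :: real
  assumes r: "\<And>k. r k > 0"
    and cover: "\<And>y. y \<in> A \<Longrightarrow> y \<noteq> x \<Longrightarrow> \<exists>k. r k \<le> dist x y \<and> dist x y < 2 * r k"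
  shows "(\<integral>\<^sup>+y. ennreal (indicator A y * dist x y powr \<beta>) \<partial>lebesgue)
     \<le> (\<Sum>k. ennreal (unit_ball_vol DIM('a) * 2 ^ DIM('a) * 2 powr \<bar>\<beta>\<bar> * r k powr (DIM('a) + \<beta>)))"
proof -
  define S where "S k = {y. r k \<le> dist x y \<and> dist x y < 2 * r k}" for k
  have le_suminf: "g k \<le> suminf g" for g :: "nat \<Rightarrow> ennreal" and k
    using sum_le_suminf[of g "{k}"] by (simp add: summableI)
  have "ennreal (indicator A y * dist x y powr \<beta>) \<le> (\<Sum>k. ennreal (indicator (S k) y * dist x y powr \<beta>))" for y
  proof (cases "y \<in> A \<and> y \<noteq> x")
    case True
    then obtain k where "r k \<le> dist x y \<and> dist x y < 2 * r k" using cover by blast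
    then have "indicator A y = (indicator (S k) y :: real)" using True by (simp add: S_def)
    moreover have "ennreal (indicator (S k) y * dist x y powr \<beta>) \<le> (\<Sum>k. ennreal (indicator (S k) y * dist x y powr \<beta>))"
      by (rule le_suminf[of "\<lambda>k. ennreal (indicator (S k) y * dist x y powr \<beta>)" k])
    ultimately show ?thesis by (simp only:)
  next
    case False
    then have "indicator A y * dist x y powr \<beta> = 0" by (auto simp: indicator_def)
    then show ?thesis by (simp only:) simp
  qed
  then have "(\<integral>\<^sup>+y. ennreal (indicator A y * dist x y powr \<beta>) \<partial>lebesgue)
      \<le> (\<integral>\<^sup>+y. (\<Sum>k. ennreal (indicator (S k) y * dist x y powr \<beta>)) \<partial>lebesgue)"
    by (intro nn_integral_mono)
  also have "\<dots> = (\<Sum>k. \<integral>\<^sup>+y. ennreal (indicator (S k) y * dist x y powr \<beta>) \<partial>lebesgue)"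
  proof (intro nn_integral_suminf)
    fix k
    have "(\<lambda>y. ennreal (indicator (S k) y * dist x y powr \<beta>)) \<in> borel_measurable borel"
      unfolding S_def by measurable
    then show "(\<lambda>y. ennreal (indicator (S k) y * dist x y powr \<beta>)) \<in> borel_measurable lebesgue"
      by (simp add: measurable_completion)
  qed
  also have "\<dots> \<le> (\<Sum>k. ennreal (unit_ball_vol DIM('a) * 2 ^ DIM('a) * 2 powr \<bar>\<beta>\<bar> * r k powr (DIM('a) + \<beta>)))"
    unfolding S_def by (intro suminf_le summableI allI nn_integral_dist_powr_annulus_le r)
  finally show ?thesis .
qed

lemma powr_power_base: "0 < (c::real) \<Longrightarrow> (c ^ n) powr t = (c powr t) ^ n"
  by (induction n) (auto simp: powr_mult)

lemma nn_integral_dist_powr_ball_le: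
  fixes \<tau> :: real
  assumes "\<tau> > 0"
  obtains C where "C \<ge> 0" and "\<And>(x::'a::euclidean_space) \<epsilon>. \<epsilon> > 0 \<Longrightarrow>
    (\<integral>\<^sup>+y. ennreal (indicator (ball x \<epsilon>) y * dist x y powr (\<tau> - DIM('a))) \<partial>lebesgue) \<le> ennreal (C * \<epsilon> powr \<tau>)"
proof
  define A where "A = unit_ball_vol DIM('a) * 2 ^ DIM('a) * 2 powr \<bar>\<tau> - DIM('a)\<bar>"
  define q where "q = (1/2::real) powr \<tau>"
  have q: "0 < q" "q < 1" using assms by (auto simp: q_def powr_divide gr_one_powr)
  show "0 \<le> A * (q / (1 - q))" using q by (simp add: A_def)
  fix x :: 'a and \<epsilon> :: real
  assume \<epsilon>: "\<epsilon> > 0"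
  define r where "r k = \<epsilon> * (1/2) ^ Suc k" for k
  have cover: "\<exists>k. r k \<le> dist x y \<and> dist x y < 2 * r k" if "y \<in> ball x \<epsilon>" "y \<noteq> x" for y
  proof -
    have "0 < dist x y / \<epsilon>" using that \<epsilon> by simp
    then obtain n where "(1/2::real) ^ n < dist x y / \<epsilon>"
      using real_arch_pow_inv[of "dist x y / \<epsilon>" "1/2"] by auto
    then have "\<epsilon> * (1/2) ^ n \<le> dist x y" using \<epsilon> by (simp add: field_simps)
    moreover have "\<not> \<epsilon> * (1/2) ^ 0 \<le> dist x y" using that by simp
    ultimately obtain k where "\<not> \<epsilon> * (1/2) ^ k \<le> dist x y" "\<epsilon> * (1/2) ^ Suc k \<le> dist x y"
      using ex_least_nat_less[of "\<lambda>n. \<epsilon> * (1/2) ^ n \<le> dist x y"] by blast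
    then show ?thesis by (intro exI[of _ k]) (auto simp: r_def)
  qed
  have "(\<lambda>k. (A * \<epsilon> powr \<tau> * q) * q ^ k) sums ((A * \<epsilon> powr \<tau> * q) * (1 / (1 - q)))"
    using q by (intro sums_mult geometric_sums) auto
  then have sum: "(\<Sum>k. ennreal (A * \<epsilon> powr \<tau> * q ^ Suc k)) = ennreal (A * \<epsilon> powr \<tau> * (q / (1 - q)))"
    using q by (intro suminf_ennreal_eq) (auto simp: A_def mult_ac)
  have "r k powr \<tau> = \<epsilon> powr \<tau> * q ^ Suc k" for k
    using \<epsilon> powr_mult[of \<epsilon> "(1/2) ^ Suc k" \<tau>] powr_power_base[of "1/2" "Suc k" \<tau>]
    by (simp add: r_def q_def del: power_Suc)
  then have "(\<integral>\<^sup>+y. ennreal (indicator (ball x \<epsilon>) y * dist x y powr (\<tau> - DIM('a))) \<partial>lebesgue)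
      \<le> (\<Sum>k. ennreal (A * \<epsilon> powr \<tau> * q ^ Suc k))"
    using nn_integral_dist_powr_le_annuli[of r "ball x \<epsilon>" x "\<tau> - DIM('a)"] cover \<epsilon>
    by (simp add: r_def A_def mult.assoc)
  also have "\<dots> = ennreal (A * \<epsilon> powr \<tau> * (q / (1 - q)))"
    by (rule sum)
  finally show "(\<integral>\<^sup>+y. ennreal (indicator (ball x \<epsilon>) y * dist x y powr (\<tau> - DIM('a))) \<partial>lebesgue)
      \<le> ennreal (A * (q / (1 - q)) * \<epsilon> powr \<tau>)"
    by (simp only: mult_ac)
qed

lemma nn_integral_dist_powr_outside_ball_finite:
  fixes x :: "'a::euclidean_space" and \<alpha> R :: real
  assumes \<alpha>: "\<alpha> > DIM('a)" and R: "R > 0"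
  shows "(\<integral>\<^sup>+y. ennreal (indicator (- ball x R) y * dist x y powr (- \<alpha>)) \<partial>lebesgue) < \<infinity>"
proof -
  define A where "A = unit_ball_vol DIM('a) * 2 ^ DIM('a) * 2 powr \<bar>- \<alpha>\<bar>"
  define q where "q = (2::real) powr (DIM('a) - \<alpha>)"
  have q: "0 < q" "q < 1" using \<alpha> by (auto simp: q_def powr_less_one)
  define r where "r k = R * 2 ^ k" for k
  have cover: "\<exists>k. r k \<le> dist x y \<and> dist x y < 2 * r k" if "y \<in> - ball x R" for y
  proof -
    obtain n where "dist x y / R < 2 ^ n" using real_arch_pow[of 2 "dist x y / R"] by auto
    then have "dist x y < R * 2 ^ n" using R by (simp add: field_simps)
    moreover have "\<not> dist x y < R * 2 ^ 0" using that by simp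
    ultimately obtain k where "\<not> dist x y < R * 2 ^ k" "dist x y < R * 2 ^ Suc k"
      using ex_least_nat_less[of "\<lambda>n. dist x y < R * 2 ^ n"] by blast
    then show ?thesis by (intro exI[of _ k]) (auto simp: r_def)
  qed
  have "(\<lambda>k. A * R powr (DIM('a) - \<alpha>) * q ^ k) sums (A * R powr (DIM('a) - \<alpha>) * (1 / (1 - q)))"
    using q by (intro sums_mult geometric_sums) auto
  then have sum: "(\<Sum>k. ennreal (A * R powr (DIM('a) - \<alpha>) * q ^ k)) = ennreal (A * R powr (DIM('a) - \<alpha>) * (1 / (1 - q)))"
    using q by (intro suminf_ennreal_eq) (auto simp: A_def)
  have "r k powr (DIM('a) - \<alpha>) = R powr (DIM('a) - \<alpha>) * q ^ k" for k
    using R by (simp add: r_def q_def powr_mult powr_power_base)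
  then have "(\<integral>\<^sup>+y. ennreal (indicator (- ball x R) y * dist x y powr (- \<alpha>)) \<partial>lebesgue)
      \<le> (\<Sum>k. ennreal (A * R powr (DIM('a) - \<alpha>) * q ^ k))"
    using nn_integral_dist_powr_le_annuli[of r "- ball x R" x "- \<alpha>"] cover R
    by (simp add: r_def A_def mult.assoc)
  also have "\<dots> < \<infinity>" by (simp add: sum)
  finally show ?thesis .
qed

section \<open>Signed powers\<close>

lemma spow_nonneg: "0 \<le> a \<Longrightarrow> spow a e = a powr e"
  unfolding spow_def by (cases "a = 0") (auto simp: powr_add[of a "e - 1" 1, simplified])

lemma spow_minus [simp]: "spow (- a) e = - spow a e"
  unfolding spow_def by simp

lemma abs_spow: "\<bar>spow a e\<bar> = \<bar>a\<bar> powr e"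
  unfolding spow_def
  by (cases "a = 0") (auto simp: abs_mult powr_add[of "\<bar>a\<bar>" "e - 1" 1, simplified])

lemma spow_measurable [measurable]: "f \<in> borel_measurable M \<Longrightarrow> (\<lambda>x. spow (f x) e) \<in> borel_measurable M"
  unfolding spow_def by measurable

lemma powr_add_le_add_powr:
  fixes x y e :: real
  assumes "0 \<le> x" "0 \<le> y" "0 < e" "e \<le> 1"
  shows "(x + y) powr e \<le> x powr e + y powr e"
proof (cases "x + y = 0")
  case True
  then show ?thesis using assms by auto
next
  case False
  then have s: "x + y > 0" using assms by auto
  have "x / (x+y) \<le> (x / (x+y)) powr e" "y / (x+y) \<le> (y / (x+y)) powr e"
    using powr_mono'[of e 1 "x/(x+y)"] powr_mono'[of e 1 "y/(x+y)"] assms s by auto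
  moreover have "x/(x+y) + y/(x+y) = 1" using s by (simp add: add_divide_distrib[symmetric])
  ultimately have "1 \<le> (x powr e + y powr e) / (x+y) powr e"
    using assms s by (simp add: powr_divide add_divide_distrib)
  then show ?thesis using s by (simp add: field_simps)
qed

lemma diff_powr_le_powr_diff:
  fixes a b e :: real
  assumes "0 \<le> b" "b \<le> a" "0 < e" "e \<le> 1"
  shows "a powr e - b powr e \<le> (a - b) powr e"
  using powr_add_le_add_powr[of "a - b" b e] assms by simp

lemma diff_powr_le_mean_value:
  fixes a b e :: real
  assumes "0 \<le> b" "b \<le> a" "1 \<le> e"
  shows "a powr e - b powr e \<le> e * a powr (e - 1) * (a - b)"
proof (cases "0 < b \<and> b < a")
  case False
  then consider "b = 0" | "b = a" using assms by linarith
  then show ?thesis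
  proof cases
    case 1
    have "a powr e = a powr (e - 1) * a"
      using assms by (cases "a = 0") (auto simp: powr_add[of a "e - 1" 1, simplified])
    then show ?thesis using 1 assms mult_right_mono[of 1 e "a powr (e-1) * a"]
      by (simp add: mult.assoc)
  qed simp
next
  case True
  have "continuous_on {b..a} (\<lambda>t. t powr e)"
    using True by (intro continuous_on_powr') (auto intro: continuous_intros)
  moreover have "(\<lambda>t. t powr e) differentiable (at t)" if "b < t" for t
    using has_real_derivative_powr[of t e] that True real_differentiable_def by fastforce
  ultimately obtain l z where z: "b < z" "z < a" "DERIV (\<lambda>t. t powr e) z :> l"
      "a powr e - b powr e = (a - b) * l"
    using MVT[of b a "\<lambda>t. t powr e"] True by auto
  have "l = e * z powr (e - 1)"
    using DERIV_unique[OF z(3) has_real_derivative_powr[of z e]] True z by auto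
  moreover have "z powr (e - 1) \<le> a powr (e - 1)"
    using z True assms by (intro powr_mono2) auto
  ultimately show ?thesis using z assms True
    by (simp add: mult_ac mult_left_mono)
qed

lemma real_pair_sign_symmetric_cases [case_names same opposite swap neg]:
  fixes Q :: "real \<Rightarrow> real \<Rightarrow> bool"
  assumes same: "\<And>a b. 0 \<le> b \<Longrightarrow> b \<le> a \<Longrightarrow> Q a b"
    and opposite: "\<And>a b. b \<le> 0 \<Longrightarrow> 0 \<le> a \<Longrightarrow> Q a b"
    and swap: "\<And>a b. Q a b \<Longrightarrow> Q b a"
    and neg: "\<And>a b. Q a b \<Longrightarrow> Q (- a) (- b)"
  shows "Q a b"
proof -
  have nonneg: "Q a b" if "0 \<le> a" "0 \<le> b" for a b
  proof (cases "b \<le> a")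
    case False
    then show ?thesis using swap[OF same[of a b]] that by simp
  qed (use same that in simp)
  consider "0 \<le> a" "0 \<le> b" | "0 \<le> a" "b \<le> 0" | "a \<le> 0" "0 \<le> b" | "a \<le> 0" "b \<le> 0"
    by linarith
  then show ?thesis
  proof cases
    case 3
    then show ?thesis using swap[OF opposite[of a b]] by simp
  next
    case 4
    then show ?thesis using neg[OF nonneg[of "- a" "- b"]] by simp
  qed (use nonneg opposite in simp_all)
qed

lemma abs_spow_diff_le_powr:
  fixes e :: real
  assumes "0 < e" "e \<le> 1"
  shows "\<bar>spow a e - spow b e\<bar> \<le> 2 * \<bar>a - b\<bar> powr e"
proof (induction a b rule: real_pair_sign_symmetric_cases)
  case (same a b)
  then have "\<bar>spow a e - spow b e\<bar> \<le> \<bar>a - b\<bar> powr e"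
    using diff_powr_le_powr_diff[of b a e] assms powr_mono2[of e b a] by (simp add: spow_nonneg)
  then show ?case by (smt (verit) powr_ge_zero)
next
  case (opposite a b)
  have "\<bar>spow a e - spow b e\<bar> \<le> \<bar>a\<bar> powr e + \<bar>b\<bar> powr e"
    using abs_triangle_ineq4[of "spow a e" "spow b e"] by (simp add: abs_spow)
  also have "\<dots> \<le> \<bar>a - b\<bar> powr e + \<bar>a - b\<bar> powr e"
    using opposite assms by (intro add_mono powr_mono2) auto
  finally show ?case by simp
qed (simp_all add: abs_minus_commute)

lemma abs_spow_diff_le_mult:
  fixes e :: real
  assumes "1 \<le> e"
  shows "\<bar>spow a e - spow b e\<bar> \<le> e * (\<bar>a\<bar> + \<bar>b\<bar>) powr (e - 1) * \<bar>a - b\<bar>"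
proof (induction a b rule: real_pair_sign_symmetric_cases)
  case (same a b)
  have "a powr e - b powr e \<le> e * a powr (e - 1) * (a - b)"
    using diff_powr_le_mean_value[of b a e] same assms by simp
  also have "\<dots> \<le> e * (a + b) powr (e - 1) * (a - b)"
    using same assms by (intro mult_right_mono mult_left_mono powr_mono2) auto
  finally show ?case using same assms powr_mono2[of e b a] by (simp add: spow_nonneg)
next
  case (opposite a b)
  have "\<bar>spow a e - spow b e\<bar> \<le> \<bar>a\<bar> powr (e - 1) * \<bar>a\<bar> + \<bar>b\<bar> powr (e - 1) * \<bar>b\<bar>"
    using abs_triangle_ineq4[of "spow a e" "spow b e"] by (simp add: spow_def abs_mult)
  also have "\<dots> \<le> (\<bar>a\<bar> + \<bar>b\<bar>) powr (e - 1) * \<bar>a\<bar> + (\<bar>a\<bar> + \<bar>b\<bar>) powr (e - 1) * \<bar>b\<bar>"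
    using assms by (intro add_mono mult_right_mono powr_mono2) auto
  also have "\<dots> = 1 * (\<bar>a\<bar> + \<bar>b\<bar>) powr (e - 1) * \<bar>a - b\<bar>"
    using opposite by (simp add: algebra_simps)
  also have "\<dots> \<le> e * (\<bar>a\<bar> + \<bar>b\<bar>) powr (e - 1) * \<bar>a - b\<bar>"
    using assms by (intro mult_right_mono) auto
  finally show ?case .
qed (simp_all add: abs_minus_commute add.commute)

section \<open>Second differences of \<open>C\<^sup>1\<^sup>,\<^sup>\<gamma>\<close> functions\<close>

lemma abs_first_order_remainder_le:
  fixes u :: "'a::euclidean_space \<Rightarrow> real" and Du :: "'a \<Rightarrow> 'a"
  assumes deriv: "\<forall>z\<in>S. (u has_derivative (\<lambda>h. Du z \<bullet> h)) (at z)"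
    and hoelder: "\<forall>z\<in>S. \<forall>w\<in>S. norm (Du z - Du w) \<le> C * norm (z - w) powr \<gamma>"
    and C: "C \<ge> 0" and \<gamma>: "\<gamma> \<ge> 0"
    and sub: "cball x (norm h) \<subseteq> S"
  shows "\<bar>u (x + h) - u x - Du x \<bullet> h\<bar> \<le> C * norm h powr (1 + \<gamma>)"
proof -
  let ?T = "cball x (norm h)"
  have segment: "x + t *\<^sub>R (x + h - x) \<in> ?T" if "t \<in> {0..1}" for t
    using that by (auto simp: dist_norm mult_left_le_one_le)
  have deriv_T: "(u has_derivative (\<lambda>k. Du z \<bullet> k)) (at z within ?T)" if "z \<in> ?T" for z
  proof -
    have "z \<in> S" using sub that by auto
    then show ?thesis using deriv by (auto intro: has_derivative_at_withinI)
  qed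
  have "onorm ((\<lambda>k. Du z \<bullet> k) - (\<lambda>k. Du x \<bullet> k)) \<le> C * norm h powr \<gamma>" if "z \<in> ?T" for z
  proof (rule onorm_le)
    fix k
    have "norm (((\<lambda>k. Du z \<bullet> k) - (\<lambda>k. Du x \<bullet> k)) k) \<le> norm (Du z - Du x) * norm k"
      using Cauchy_Schwarz_ineq2[of "Du z - Du x" k] by (simp add: inner_diff_left)
    also have "norm (Du z - Du x) \<le> C * norm (z - x) powr \<gamma>"
      using hoelder sub that by (meson centre_in_cball norm_ge_zero subsetD)
    also have "C * norm (z - x) powr \<gamma> \<le> C * norm h powr \<gamma>"
      using that C \<gamma> by (intro mult_left_mono powr_mono2) (auto simp: dist_norm norm_minus_commute)
    finally show "norm (((\<lambda>k. Du z \<bullet> k) - (\<lambda>k. Du x \<bullet> k)) k) \<le> C * norm h powr \<gamma> * norm k"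
      by (simp add: mult_right_mono)
  qed
  then have "norm (u (x + h) - u x - Du x \<bullet> (x + h - x)) \<le> norm (x + h - x) * (C * norm h powr \<gamma>)"
    by (intro differentiable_bound_linearization[where S = ?T and f' = "\<lambda>z k. Du z \<bullet> k", OF segment deriv_T])
      auto
  then show ?thesis
    by (cases "h = 0") (auto simp: powr_add mult_ac)
qed

text \<open>For \<open>u \<in> C\<^sup>1\<^sup>,\<^sup>\<gamma>\<close> the second difference \<open>spow (u x - u (x + h)) e + spow (u x - u (x - h)) e\<close>
  vanishes to this order as \<open>h \<rightarrow> 0\<close>: a Lipschitz bound for \<open>e \<ge> 1\<close>, Hoelder continuity of the
  signed power for \<open>e < 1\<close>.\<close>

definition second_difference_order :: "real \<Rightarrow> real \<Rightarrow> real" where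
  "second_difference_order e \<gamma> = (if 1 \<le> e then e + \<gamma> else e * (1 + \<gamma>))"

lemma abs_spow_diff_le_second_difference_order:
  fixes a b t e :: real
  assumes a: "\<bar>a\<bar> \<le> L * t" and b: "\<bar>b\<bar> \<le> L * t" and ab: "\<bar>a - b\<bar> \<le> D * t powr (1 + \<gamma>)"
    and t: "t > 0" and D: "D \<ge> 0" and e: "e > 0"
  shows "\<bar>spow a e - spow b e\<bar>
    \<le> (if 1 \<le> e then e * (2 * L) powr (e - 1) * D else 2 * D powr e) * t powr second_difference_order e \<gamma>"
proof (cases "1 \<le> e")
  case True
  have "0 \<le> L * t" using a abs_ge_zero order_trans by blast
  then have L: "L \<ge> 0" using t by (simp add: zero_le_mult_iff)
  have "\<bar>spow a e - spow b e\<bar> \<le> e * (\<bar>a\<bar> + \<bar>b\<bar>) powr (e - 1) * \<bar>a - b\<bar>"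
    by (rule abs_spow_diff_le_mult[OF True])
  also have "\<dots> \<le> e * (2 * L * t) powr (e - 1) * (D * t powr (1 + \<gamma>))"
    using a b ab True e by (intro mult_mono powr_mono2) auto
  also have "\<dots> = e * (2 * L) powr (e - 1) * D * (t powr (e - 1) * t powr (1 + \<gamma>))"
    using L t by (simp add: powr_mult mult_ac)
  also have "t powr (e - 1) * t powr (1 + \<gamma>) = t powr second_difference_order e \<gamma>"
    using t True by (simp add: second_difference_order_def powr_add[symmetric])
  finally show ?thesis using True by simp
next
  case False
  have "\<bar>spow a e - spow b e\<bar> \<le> 2 * \<bar>a - b\<bar> powr e"
    using abs_spow_diff_le_powr[of e a b] e False by simp
  also have "\<dots> \<le> 2 * (D * t powr (1 + \<gamma>)) powr e"
    using ab e by (intro mult_left_mono powr_mono2) auto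
  also have "\<dots> = 2 * D powr e * t powr second_difference_order e \<gamma>"
    using D t False by (simp add: second_difference_order_def powr_mult powr_powr mult_ac)
  finally show ?thesis using False by simp
qed

lemma abs_spow_second_difference_le:
  fixes u :: "'a::euclidean_space \<Rightarrow> real" and Du :: "'a \<Rightarrow> 'a"
  assumes deriv: "\<forall>z\<in>S. (u has_derivative (\<lambda>h. Du z \<bullet> h)) (at z)"
    and hoelder: "\<forall>z\<in>S. \<forall>w\<in>S. norm (Du z - Du w) \<le> C * norm (z - w) powr \<gamma>"
    and C: "C \<ge> 0" and \<gamma>: "\<gamma> \<ge> 0" and e: "e > 0"
    and sub: "\<And>x. x \<in> K \<Longrightarrow> cball x \<delta> \<subseteq> S" and M: "\<And>x. x \<in> K \<Longrightarrow> norm (Du x) \<le> M"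
  obtains E where "E \<ge> 0" and "\<And>x h. x \<in> K \<Longrightarrow> 0 < norm h \<Longrightarrow> norm h \<le> \<delta> \<Longrightarrow>
    \<bar>spow (u x - u (x + h)) e + spow (u x - u (x - h)) e\<bar> \<le> E * norm h powr second_difference_order e \<gamma>"
proof
  define L where "L = M + C * \<delta> powr \<gamma>"
  show "0 \<le> (if 1 \<le> e then e * (2 * L) powr (e - 1) * (2 * C) else 2 * (2 * C) powr e)"
    using C e by simp
  fix x h :: 'a
  assume x: "x \<in> K" and h: "0 < norm h" "norm h \<le> \<delta>"
  define a where "a = u (x + h) - u x"
  define b where "b = u x - u (x - h)"
  have "cball x (norm h) \<subseteq> S" "cball x (norm (- h)) \<subseteq> S" using sub[OF x] h by auto
  from this[THEN abs_first_order_remainder_le[OF deriv hoelder C \<gamma>]]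
  have ra: "\<bar>a - Du x \<bullet> h\<bar> \<le> C * norm h powr (1 + \<gamma>)" and rb: "\<bar>b - Du x \<bullet> h\<bar> \<le> C * norm h powr (1 + \<gamma>)"
    by (simp_all add: a_def b_def inner_minus_right)
  have "norm h powr (1 + \<gamma>) = norm h * norm h powr \<gamma>" using h by (simp add: powr_add)
  also have "\<dots> \<le> norm h * \<delta> powr \<gamma>" using h \<gamma> by (intro mult_left_mono powr_mono2) auto
  finally have "C * norm h powr (1 + \<gamma>) \<le> C * \<delta> powr \<gamma> * norm h"
    using C by (metis mult.assoc mult.commute mult_left_mono)
  moreover have "\<bar>Du x \<bullet> h\<bar> \<le> M * norm h"
    using Cauchy_Schwarz_ineq2[of "Du x" h] M[OF x] by (smt (verit) mult_right_mono norm_ge_zero)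
  ultimately have "\<bar>a\<bar> \<le> L * norm h" "\<bar>b\<bar> \<le> L * norm h"
    using ra rb by (simp_all add: L_def algebra_simps)
  moreover have "\<bar>a - b\<bar> \<le> 2 * C * norm h powr (1 + \<gamma>)" using ra rb by linarith
  moreover have "spow (u x - u (x + h)) e + spow (u x - u (x - h)) e = - (spow a e - spow b e)"
    by (simp add: a_def b_def flip: spow_minus)
  ultimately show "\<bar>spow (u x - u (x + h)) e + spow (u x - u (x - h)) e\<bar>
    \<le> (if 1 \<le> e then e * (2 * L) powr (e - 1) * (2 * C) else 2 * (2 * C) powr e) * norm h powr second_difference_order e \<gamma>"
    using abs_spow_diff_le_second_difference_order[of a L "norm h" b "2 * C" \<gamma> e] h C e by simp
qed

lemma compact_cball_thickening:
  fixes K :: "'a::euclidean_space set"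
  assumes "compact K" "open \<Omega>" "K \<subseteq> \<Omega>"
  obtains \<delta> K' where "\<delta> > 0" "compact K'" "K' \<subseteq> \<Omega>" "\<And>x. x \<in> K \<Longrightarrow> cball x \<delta> \<subseteq> K'"
proof -
  obtain \<delta> where \<delta>: "\<delta> > 0" "(\<Union>x\<in>K. cball x \<delta>) \<subseteq> \<Omega>"
    using compact_subset_open_imp_cball_epsilon_subset[OF assms] by blast
  define K' where "K' = {x + z | x z. x \<in> K \<and> z \<in> cball 0 \<delta>}"
  have "compact K'" unfolding K'_def by (intro compact_sums assms(1) compact_cball)
  moreover have "K' = (\<Union>x\<in>K. cball x \<delta>)"
  proof
    show "K' \<subseteq> (\<Union>x\<in>K. cball x \<delta>)" by (auto simp: K'_def dist_norm)
    show "(\<Union>x\<in>K. cball x \<delta>) \<subseteq> K'"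
    proof
      fix y assume "y \<in> (\<Union>x\<in>K. cball x \<delta>)"
      then obtain x where "x \<in> K" "y \<in> cball x \<delta>" by blast
      then have "y = x + (y - x) \<and> x \<in> K \<and> y - x \<in> cball 0 \<delta>"
        by (simp add: dist_norm norm_minus_commute)
      then show "y \<in> K'" unfolding K'_def by blast
    qed
  qed
  ultimately show ?thesis using that \<delta> by blast
qed

lemma in_C1gamma_loc_second_difference_le:
  fixes u :: "'a::euclidean_space \<Rightarrow> real"
  assumes "in_C1gamma_loc \<gamma> \<Omega> u" "open \<Omega>" "compact K" "K \<subseteq> \<Omega>" "\<gamma> \<ge> 0" "e > 0"
  obtains \<delta> E where "\<delta> > 0" "E \<ge> 0" "\<And>x h. x \<in> K \<Longrightarrow> 0 < norm h \<Longrightarrow> norm h \<le> \<delta> \<Longrightarrow>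
    \<bar>spow (u x - u (x + h)) e + spow (u x - u (x - h)) e\<bar> \<le> E * norm h powr second_difference_order e \<gamma>"
proof -
  obtain Du :: "'a \<Rightarrow> 'a" where deriv: "\<forall>x\<in>\<Omega>. (u has_derivative (\<lambda>h. Du x \<bullet> h)) (at x)"
    and cont: "continuous_on \<Omega> Du"
    and hoelder: "\<forall>K. compact K \<and> K \<subseteq> \<Omega> \<longrightarrow> (\<exists>C. \<forall>x\<in>K. \<forall>y\<in>K. norm (Du x - Du y) \<le> C * norm (x - y) powr \<gamma>)"
    using assms(1) unfolding in_C1gamma_loc_def by blast
  obtain \<delta> K' where \<delta>: "\<delta> > 0" and K': "compact K'" "K' \<subseteq> \<Omega>" and sub: "\<And>x. x \<in> K \<Longrightarrow> cball x \<delta> \<subseteq> K'"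
    using compact_cball_thickening[OF assms(3,2,4)] by blast
  obtain C0 where C0: "\<forall>z\<in>K'. \<forall>w\<in>K'. norm (Du z - Du w) \<le> C0 * norm (z - w) powr \<gamma>"
    using hoelder K' by blast
  have C: "\<forall>z\<in>K'. \<forall>w\<in>K'. norm (Du z - Du w) \<le> max C0 0 * norm (z - w) powr \<gamma>"
  proof (intro ballI)
    fix z w assume "z \<in> K'" "w \<in> K'"
    then have "norm (Du z - Du w) \<le> C0 * norm (z - w) powr \<gamma>" using C0 by blast
    also have "\<dots> \<le> max C0 0 * norm (z - w) powr \<gamma>" by (intro mult_right_mono) auto
    finally show "norm (Du z - Du w) \<le> max C0 0 * norm (z - w) powr \<gamma>" .
  qed
  obtain M where "\<And>x. x \<in> K' \<Longrightarrow> norm (Du x) \<le> M"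
    using continuous_on_compact_bound[OF K'(1) continuous_on_subset[OF cont K'(2)]] by blast
  moreover have "x \<in> K'" if "x \<in> K" for x using sub[OF that] \<delta> by auto
  ultimately have M: "\<And>x. x \<in> K \<Longrightarrow> norm (Du x) \<le> M" by blast
  have "\<forall>z\<in>K'. (u has_derivative (\<lambda>h. Du z \<bullet> h)) (at z)" using deriv K'(2) by blast
  from abs_spow_second_difference_le[OF this C max.cobounded2 assms(5,6) sub M]
  obtain E where "E \<ge> 0" "\<And>x h. x \<in> K \<Longrightarrow> 0 < norm h \<Longrightarrow> norm h \<le> \<delta> \<Longrightarrow>
    \<bar>spow (u x - u (x + h)) e + spow (u x - u (x - h)) e\<bar> \<le> E * norm h powr second_difference_order e \<gamma>"
    by blast
  with \<delta> that show ?thesis by blast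
qed

section \<open>Truncated integrals\<close>

text \<open>The estimates only use \<open>e > 0\<close> and \<open>\<alpha> > N\<close>, so they are stated for general exponents;
  \<open>frac_trunc\<close> is twice the case \<open>e = p - 1\<close>, \<open>\<alpha> = N + p s\<close>.\<close>

definition trunc_integral :: "real \<Rightarrow> real \<Rightarrow> ('a::euclidean_space \<Rightarrow> real) \<Rightarrow> real \<Rightarrow> 'a \<Rightarrow> real" where
  "trunc_integral e \<alpha> u \<epsilon> x =
     (\<integral>y. indicator (- ball x \<epsilon>) y * (spow (u x - u y) e / norm (x - y) powr \<alpha>) \<partial>lebesgue)"

lemma frac_trunc_eq_trunc_integral:
  fixes s p :: real
  shows "frac_trunc s p u \<epsilon> x = 2 * trunc_integral (p - 1) (DIM('a) + p * s) u \<epsilon> (x :: 'a::euclidean_space)"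
  by (simp add: frac_trunc_def trunc_integral_def)

lemma measurable_ident_lebesgue [measurable]: "(\<lambda>x::'a::euclidean_space. x) \<in> borel_measurable lebesgue"
  by (simp add: measurable_completion)

lemma trunc_kernel_measurable:
  fixes u :: "'a::euclidean_space \<Rightarrow> real"
  assumes [measurable]: "u \<in> borel_measurable lebesgue"
  shows "(\<lambda>z. indicator (- ball (fst z) \<epsilon>) (snd z) * (spow (u (fst z) - u (snd z)) e / norm (fst z - snd z) powr \<alpha>))
     \<in> borel_measurable (lebesgue \<Otimes>\<^sub>M lebesgue)"
proof -
  have [measurable]: "(\<lambda>z::'a\<times>'a. fst z) \<in> borel_measurable (lebesgue \<Otimes>\<^sub>M lebesgue)"
    "(\<lambda>z::'a\<times>'a. snd z) \<in> borel_measurable (lebesgue \<Otimes>\<^sub>M lebesgue)"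
    "(\<lambda>z::'a\<times>'a. u (fst z)) \<in> borel_measurable (lebesgue \<Otimes>\<^sub>M lebesgue)"
    "(\<lambda>z::'a\<times>'a. u (snd z)) \<in> borel_measurable (lebesgue \<Otimes>\<^sub>M lebesgue)"
    by (rule measurable_compose[OF measurable_fst] measurable_compose[OF measurable_snd]; simp)+
  have [measurable]: "(\<lambda>z::'a\<times>'a. fst z - snd z) \<in> borel_measurable (lebesgue \<Otimes>\<^sub>M lebesgue)"
    by (rule borel_measurable_diff) measurable
  have "(\<lambda>z. indicator (- ball (fst z) \<epsilon>) (snd z) * (spow (u (fst z) - u (snd z)) e / norm (fst z - snd z) powr \<alpha>))
     = (\<lambda>z. (if norm (fst z - snd z) < \<epsilon> then 0 else 1) * (spow (u (fst z) - u (snd z)) e / norm (fst z - snd z) powr \<alpha>))"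
    by (auto simp: fun_eq_iff indicator_def dist_norm)
  also have "\<dots> \<in> borel_measurable (lebesgue \<Otimes>\<^sub>M lebesgue)"
    by measurable
  finally show ?thesis .
qed

lemma sigma_finite_lebesgue: "sigma_finite_measure (lebesgue :: 'a::euclidean_space measure)"
proof
  show "\<exists>A. countable A \<and> A \<subseteq> sets (lebesgue::'a measure) \<and> \<Union> A = space lebesgue \<and> (\<forall>a\<in>A. emeasure lebesgue a \<noteq> \<infinity>)"
  proof (intro exI conjI)
    show "countable (range (\<lambda>n::nat. ball (0::'a) (real n)))" by simp
    show "range (\<lambda>n::nat. ball (0::'a) (real n)) \<subseteq> sets lebesgue" by auto
    show "\<Union> (range (\<lambda>n::nat. ball (0::'a) (real n))) = space lebesgue"
    proof -
      have "y \<in> (\<Union>n. ball (0::'a) (real n))" for y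
        using reals_Archimedean2[of "norm y"] by auto
      then show ?thesis by auto
    qed
    show "\<forall>a\<in>range (\<lambda>n::nat. ball (0::'a) (real n)). emeasure lebesgue a \<noteq> \<infinity>"
      by (auto simp: emeasure_ball)
  qed
qed

lemma trunc_integral_measurable [measurable]:
  fixes u :: "'a::euclidean_space \<Rightarrow> real"
  assumes "u \<in> borel_measurable lebesgue"
  shows "trunc_integral e \<alpha> u \<epsilon> \<in> borel_measurable lebesgue"
proof -
  interpret sigma_finite_measure "lebesgue::'a measure" by (rule sigma_finite_lebesgue)
  show ?thesis
    unfolding trunc_integral_def[abs_def]
    by (rule borel_measurable_lebesgue_integral) (use trunc_kernel_measurable[OF assms] in simp)
qed

lemma distr_lebesgue_point_reflection:
  fixes c :: "'a::euclidean_space"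
  shows "distr lebesgue lebesgue (\<lambda>y. c - y) = lebesgue"
    and "(\<lambda>y. c - y) \<in> lebesgue \<rightarrow>\<^sub>M lebesgue"
proof -
  have reflection: "(\<lambda>x. c + (\<Sum>j\<in>Basis. (- 1 * (x \<bullet> j)) *\<^sub>R j)) = (\<lambda>y::'a. c - y)"
    by (auto simp: fun_eq_iff sum_negf euclidean_representation)
  show "distr lebesgue lebesgue (\<lambda>y. c - y) = lebesgue"
    using lebesgue_affine_euclidean[of "\<lambda>_. -1" c] unfolding reflection by (simp add: density_1)
  show "(\<lambda>y. c - y) \<in> lebesgue \<rightarrow>\<^sub>M lebesgue"
    using lebesgue_affine_measurable[of "\<lambda>_. -1" c] unfolding reflection by simp
qed

lemma integrable_point_reflection:
  fixes c :: "'a::euclidean_space" and f :: "'a \<Rightarrow> real"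
  assumes "integrable lebesgue f"
  shows "integrable lebesgue (\<lambda>y. f (c - y))"
  using integrable_distr_eq[OF distr_lebesgue_point_reflection(2)[of c], of f]
    distr_lebesgue_point_reflection(1)[of c] assms
  by (simp add: borel_measurable_integrable)

lemma integral_add_point_reflection:
  fixes c :: "'a::euclidean_space" and f :: "'a \<Rightarrow> real"
  assumes "integrable lebesgue f"
  shows "(\<integral>y. f y + f (c - y) \<partial>lebesgue) = 2 * (\<integral>y. f y \<partial>lebesgue)"
proof -
  have "(\<integral>y. f (c - y) \<partial>lebesgue) = (\<integral>y. f y \<partial>lebesgue)"
    using integral_distr[OF distr_lebesgue_point_reflection(2)[of c] borel_measurable_integrable[OF assms]]
      distr_lebesgue_point_reflection(1)[of c] by simp
  then show ?thesis
    using Bochner_Integration.integral_add[OF assms integrable_point_reflection[OF assms]] by simp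
qed

lemma integrable_one_plus_norm_powr:
  fixes \<alpha> :: real
  assumes \<alpha>: "\<alpha> > DIM('a)"
  shows "integrable lebesgue (\<lambda>y::'a::euclidean_space. 1 / (1 + norm y) powr \<alpha>)"
proof (rule integrableI_bounded)
  show "(\<lambda>y::'a. 1 / (1 + norm y) powr \<alpha>) \<in> borel_measurable lebesgue" by measurable
  have \<alpha>0: "\<alpha> > 0" using \<alpha> by (smt (verit) of_nat_0_le_iff)
  have "ennreal (norm (1 / (1 + norm y) powr \<alpha>)) \<le>
      ennreal (indicator (ball (0::'a) 1) y) + ennreal (indicator (- ball 0 1) y * dist 0 y powr (- \<alpha>))" for y :: 'a
  proof (cases "norm y < 1")
    case True
    have "1 \<le> (1 + norm y) powr \<alpha>" using \<alpha>0 by (intro ge_one_powr_ge_zero) auto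
    then show ?thesis using True by (auto intro!: ennreal_leI simp: indicator_def divide_le_eq_1)
  next
    case False
    then have "1 / (1 + norm y) powr \<alpha> \<le> 1 / norm y powr \<alpha>"
      using \<alpha>0 by (intro divide_left_mono powr_mono2) (auto intro!: mult_pos_pos)
    then show ?thesis using False by (auto intro!: ennreal_leI simp: indicator_def powr_minus_divide)
  qed
  then have "(\<integral>\<^sup>+y. ennreal (norm (1 / (1 + norm (y::'a)) powr \<alpha>)) \<partial>lebesgue) \<le>
      (\<integral>\<^sup>+y. ennreal (indicator (ball (0::'a) 1) y) + ennreal (indicator (- ball 0 1) y * dist 0 y powr (- \<alpha>)) \<partial>lebesgue)"
    by (intro nn_integral_mono)
  also have "\<dots> = emeasure lebesgue (ball (0::'a) 1) + (\<integral>\<^sup>+y. ennreal (indicator (- ball (0::'a) 1) y * dist 0 y powr (- \<alpha>)) \<partial>lebesgue)"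
  proof (subst nn_integral_add)
    show "(\<lambda>y. ennreal (indicator (ball (0::'a) 1) y)) \<in> borel_measurable lebesgue"
      by (intro measurable_compose[OF borel_measurable_indicator measurable_ennreal]) simp
    have "(\<lambda>y. indicator (- ball (0::'a) 1) y * dist 0 y powr (- \<alpha>)) \<in> borel_measurable borel" by measurable
    then show "(\<lambda>y. ennreal (indicator (- ball (0::'a) 1) y * dist 0 y powr (- \<alpha>))) \<in> borel_measurable lebesgue"
      by (simp add: measurable_completion)
  qed (simp_all add: ennreal_indicator nn_integral_indicator)
  also have "\<dots> < \<infinity>"
    using nn_integral_dist_powr_outside_ball_finite[OF \<alpha>, of 1 0] by (simp add: emeasure_ball)
  finally show "(\<integral>\<^sup>+y. ennreal (norm (1 / (1 + norm (y::'a)) powr \<alpha>)) \<partial>lebesgue) < \<infinity>" .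
qed

lemma one_plus_norm_le_mult_dist:
  fixes x y :: "'a::real_normed_vector"
  assumes "norm x \<le> R" "0 < \<epsilon>" "\<epsilon> \<le> dist x y"
  shows "1 + norm y \<le> ((1 + R) / \<epsilon> + 1) * dist x y"
proof -
  have "R \<ge> 0" using assms(1) norm_ge_zero order_trans by blast
  moreover have "1 \<le> dist x y / \<epsilon>" using assms by simp
  ultimately have "(1 + R) * 1 \<le> (1 + R) * (dist x y / \<epsilon>)" by (intro mult_left_mono) auto
  then have "1 + norm x \<le> (1 + R) / \<epsilon> * dist x y" using assms(1) by simp
  moreover have "norm y \<le> norm x + dist x y"
    using norm_triangle_ineq4[of x "x - y"] by (simp add: dist_norm)
  ultimately show ?thesis by (simp add: algebra_simps)
qed

lemma abs_trunc_kernel_le: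
  fixes u :: "'a::euclidean_space \<Rightarrow> real"
  assumes e: "e > 0" and \<alpha>: "\<alpha> > 0" and \<epsilon>: "\<epsilon> > 0" and x: "norm x \<le> R"
  shows "\<bar>indicator (- ball x \<epsilon>) y * (spow (u x - u y) e / norm (x - y) powr \<alpha>)\<bar>
    \<le> 2 powr e * ((1 + R) / \<epsilon> + 1) powr \<alpha> * (\<bar>u x\<bar> powr e * (1 / (1 + norm y) powr \<alpha>) + \<bar>u y\<bar> powr e / (1 + norm y) powr \<alpha>)"
proof (cases "\<epsilon> \<le> dist x y")
  case False
  then show ?thesis by (simp add: indicator_def)
next
  case True
  define c where "c = (1 + R) / \<epsilon> + 1"
  have "0 \<le> 1 + R" using x norm_ge_zero[of x] by linarith
  then have c: "c \<ge> 1" using \<epsilon> by (simp add: c_def)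
  have d: "dist x y > 0" using True \<epsilon> by linarith
  have num: "\<bar>spow (u x - u y) e\<bar> \<le> 2 powr e * (\<bar>u x\<bar> powr e + \<bar>u y\<bar> powr e)"
  proof -
    have "\<bar>spow (u x - u y) e\<bar> = \<bar>u x - u y\<bar> powr e" by (rule abs_spow)
    also have "\<dots> \<le> (2 * max \<bar>u x\<bar> \<bar>u y\<bar>) powr e" using e by (intro powr_mono2) auto
    also have "\<dots> = 2 powr e * max \<bar>u x\<bar> \<bar>u y\<bar> powr e" by (simp add: powr_mult)
    also have "max \<bar>u x\<bar> \<bar>u y\<bar> powr e \<le> \<bar>u x\<bar> powr e + \<bar>u y\<bar> powr e"
      by (cases "\<bar>u x\<bar> \<le> \<bar>u y\<bar>") (auto simp: max_def)
    finally show ?thesis by simp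
  qed
  have den: "1 / dist x y powr \<alpha> \<le> c powr \<alpha> / (1 + norm y) powr \<alpha>"
  proof -
    have "(1 + norm y) powr \<alpha> \<le> (c * dist x y) powr \<alpha>"
      using one_plus_norm_le_mult_dist[OF x \<epsilon> True] \<alpha> by (intro powr_mono2) (auto simp: c_def)
    also have "\<dots> = c powr \<alpha> * dist x y powr \<alpha>" using c d by (simp add: powr_mult)
    finally have le: "(1 + norm y) powr \<alpha> \<le> c powr \<alpha> * dist x y powr \<alpha>" .
    have "1 + norm y > 0" by (smt (verit) norm_ge_zero)
    then have "(1 + norm y) powr \<alpha> > 0" by simp
    moreover have "dist x y powr \<alpha> > 0" using d by simp
    ultimately show ?thesis using le by (simp add: divide_simps mult.commute)
  qed
  have "\<bar>indicator (- ball x \<epsilon>) y * (spow (u x - u y) e / norm (x - y) powr \<alpha>)\<bar>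
      = \<bar>spow (u x - u y) e\<bar> * (1 / dist x y powr \<alpha>)"
    using True by (simp add: indicator_def abs_mult dist_norm)
  also have "\<dots> \<le> (2 powr e * (\<bar>u x\<bar> powr e + \<bar>u y\<bar> powr e)) * (c powr \<alpha> / (1 + norm y) powr \<alpha>)"
    using num den d by (intro mult_mono) auto
  also have "\<dots> = 2 powr e * c powr \<alpha> * (\<bar>u x\<bar> powr e * (1 / (1 + norm y) powr \<alpha>) + \<bar>u y\<bar> powr e / (1 + norm y) powr \<alpha>)"
    by (simp add: divide_inverse algebra_simps)
  finally show ?thesis by (simp add: c_def)
qed

lemma abs_trunc_kernel_symmetrized_le:
  fixes u :: "'a::euclidean_space \<Rightarrow> real" and x :: 'a and \<epsilon> \<epsilon>' e \<alpha> \<theta> E :: real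
  defines "G \<equiv> \<lambda>y. indicator (ball x \<epsilon> - ball x \<epsilon>') y * (spow (u x - u y) e / norm (x - y) powr \<alpha>)"
  assumes kernel: "\<And>h. 0 < norm h \<Longrightarrow> norm h \<le> \<epsilon> \<Longrightarrow>
      \<bar>spow (u x - u (x + h)) e + spow (u x - u (x - h)) e\<bar> \<le> E * norm h powr \<theta>"
    and "0 < \<epsilon>'" "E \<ge> 0"
  shows "\<bar>G y + G (x + x - y)\<bar> \<le> E * (indicator (ball x \<epsilon>) y * dist x y powr (\<theta> - \<alpha>))"
proof (cases "\<epsilon>' \<le> dist x y \<and> dist x y < \<epsilon>")
  case True
  define h where "h = y - x"
  have h: "y = x + h" "x + x - y = x - h" "norm h = dist x y"
    by (simp_all add: h_def dist_norm norm_minus_commute algebra_simps)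
  have reflected: "dist x (x + x - y) = dist x y"
    unfolding dist_norm by (simp add: algebra_simps norm_minus_commute)
  have "0 < norm h" "norm h \<le> \<epsilon>" using True \<open>0 < \<epsilon>'\<close> h(3) by linarith+
  then have "\<bar>spow (u x - u (x + h)) e + spow (u x - u (x - h)) e\<bar> / norm h powr \<alpha>
      \<le> E * norm h powr \<theta> / norm h powr \<alpha>"
    by (intro divide_right_mono kernel) auto
  moreover have "\<bar>G y + G (x + x - y)\<bar>
      = \<bar>spow (u x - u (x + h)) e + spow (u x - u (x - h)) e\<bar> / norm h powr \<alpha>"
    using True reflected by (simp add: G_def h(1,2) add_divide_distrib[symmetric] norm_minus_commute)
  ultimately show ?thesis using True h(3) by (simp add: powr_diff)
next
  case False
  then have "G y = 0" "G (x + x - y) = 0"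
    by (auto simp: G_def indicator_def dist_norm algebra_simps norm_minus_commute)
  then show ?thesis using \<open>E \<ge> 0\<close> by simp
qed

context
  fixes u :: "'a::euclidean_space \<Rightarrow> real" and e \<alpha> :: real
  assumes u_measurable [measurable]: "u \<in> borel_measurable lebesgue"
    and tail: "integrable lebesgue (\<lambda>y. \<bar>u y\<bar> powr e / (1 + norm y) powr \<alpha>)"
    and \<alpha>: "\<alpha> > DIM('a)" and e: "e > 0"
begin

lemma trunc_kernel_dominated:
  assumes "\<epsilon> > 0" "norm x \<le> R"
  shows "integrable lebesgue (\<lambda>y. 2 powr e * ((1 + R) / \<epsilon> + 1) powr \<alpha> *
      (\<bar>u x\<bar> powr e * (1 / (1 + norm y) powr \<alpha>) + \<bar>u y\<bar> powr e / (1 + norm y) powr \<alpha>))"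
    and "(\<lambda>y. indicator (- ball x \<epsilon>) y * (spow (u x - u y) e / norm (x - y) powr \<alpha>)) \<in> borel_measurable lebesgue"
    and "\<bar>indicator (- ball x \<epsilon>) y * (spow (u x - u y) e / norm (x - y) powr \<alpha>)\<bar>
      \<le> 2 powr e * ((1 + R) / \<epsilon> + 1) powr \<alpha> *
      (\<bar>u x\<bar> powr e * (1 / (1 + norm y) powr \<alpha>) + \<bar>u y\<bar> powr e / (1 + norm y) powr \<alpha>)"
proof -
  have "\<alpha> > 0" using \<alpha> by (smt (verit) of_nat_0_le_iff)
  then show "\<bar>indicator (- ball x \<epsilon>) y * (spow (u x - u y) e / norm (x - y) powr \<alpha>)\<bar>
      \<le> 2 powr e * ((1 + R) / \<epsilon> + 1) powr \<alpha> *
      (\<bar>u x\<bar> powr e * (1 / (1 + norm y) powr \<alpha>) + \<bar>u y\<bar> powr e / (1 + norm y) powr \<alpha>)"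
    by (rule abs_trunc_kernel_le[OF e _ assms])
  show "integrable lebesgue (\<lambda>y. 2 powr e * ((1 + R) / \<epsilon> + 1) powr \<alpha> *
      (\<bar>u x\<bar> powr e * (1 / (1 + norm y) powr \<alpha>) + \<bar>u y\<bar> powr e / (1 + norm y) powr \<alpha>))"
    using integrable_one_plus_norm_powr[OF \<alpha>] tail
    by (intro integrable_mult_right Bochner_Integration.integrable_add)
  show "(\<lambda>y. indicator (- ball x \<epsilon>) y * (spow (u x - u y) e / norm (x - y) powr \<alpha>)) \<in> borel_measurable lebesgue"
    using measurable_Pair2[OF trunc_kernel_measurable[OF u_measurable, of \<epsilon> e \<alpha>], of x] by simp
qed

lemma trunc_kernel_integrable:
  assumes "\<epsilon> > 0"
  shows "integrable lebesgue (\<lambda>y. indicator (- ball x \<epsilon>) y * (spow (u x - u y) e / norm (x - y) powr \<alpha>))"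
proof (rule Bochner_Integration.integrable_bound)
  note dom = trunc_kernel_dominated[OF assms order_refl]
  show "integrable lebesgue (\<lambda>y. 2 powr e * ((1 + norm x) / \<epsilon> + 1) powr \<alpha> *
      (\<bar>u x\<bar> powr e * (1 / (1 + norm y) powr \<alpha>) + \<bar>u y\<bar> powr e / (1 + norm y) powr \<alpha>))"
    by (rule dom(1))
  show "(\<lambda>y. indicator (- ball x \<epsilon>) y * (spow (u x - u y) e / norm (x - y) powr \<alpha>)) \<in> borel_measurable lebesgue"
    by (rule dom(2))
  show "AE y in lebesgue. norm (indicator (- ball x \<epsilon>) y * (spow (u x - u y) e / norm (x - y) powr \<alpha>))
      \<le> norm (2 powr e * ((1 + norm x) / \<epsilon> + 1) powr \<alpha> *
        (\<bar>u x\<bar> powr e * (1 / (1 + norm y) powr \<alpha>) + \<bar>u y\<bar> powr e / (1 + norm y) powr \<alpha>))"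
  proof (intro AE_I2)
    fix y
    have "0 \<le> 2 powr e * ((1 + norm x) / \<epsilon> + 1) powr \<alpha> *
        (\<bar>u x\<bar> powr e * (1 / (1 + norm y) powr \<alpha>) + \<bar>u y\<bar> powr e / (1 + norm y) powr \<alpha>)"
      by (intro mult_nonneg_nonneg add_nonneg_nonneg divide_nonneg_nonneg) auto
    with dom(3)[where x = x and y = y] show "norm (indicator (- ball x \<epsilon>) y * (spow (u x - u y) e / norm (x - y) powr \<alpha>))
      \<le> norm (2 powr e * ((1 + norm x) / \<epsilon> + 1) powr \<alpha> *
        (\<bar>u x\<bar> powr e * (1 / (1 + norm y) powr \<alpha>) + \<bar>u y\<bar> powr e / (1 + norm y) powr \<alpha>))"
      by simp
  qed
qed

lemma abs_trunc_integral_le: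
  assumes "\<epsilon> > 0" "norm x \<le> R"
  shows "\<bar>trunc_integral e \<alpha> u \<epsilon> x\<bar> \<le> 2 powr e * ((1 + R) / \<epsilon> + 1) powr \<alpha> *
      (\<bar>u x\<bar> powr e * (\<integral>y. 1 / (1 + norm (y::'a)) powr \<alpha> \<partial>lebesgue) + (\<integral>y. \<bar>u y\<bar> powr e / (1 + norm y) powr \<alpha> \<partial>lebesgue))"
proof -
  note dom = trunc_kernel_dominated[OF assms]
  have int1: "integrable lebesgue (\<lambda>y::'a. \<bar>u x\<bar> powr e * (1 / (1 + norm y) powr \<alpha>))"
    using integrable_one_plus_norm_powr[OF \<alpha>] by (rule integrable_mult_right)
  have "\<bar>trunc_integral e \<alpha> u \<epsilon> x\<bar>
      \<le> (\<integral>y. \<bar>indicator (- ball x \<epsilon>) y * (spow (u x - u y) e / norm (x - y) powr \<alpha>)\<bar> \<partial>lebesgue)"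
    unfolding trunc_integral_def by (rule integral_abs_bound)
  also have "\<dots> \<le> (\<integral>y. 2 powr e * ((1 + R) / \<epsilon> + 1) powr \<alpha> *
      (\<bar>u x\<bar> powr e * (1 / (1 + norm y) powr \<alpha>) + \<bar>u y\<bar> powr e / (1 + norm y) powr \<alpha>) \<partial>lebesgue)"
    using dom trunc_kernel_integrable[OF assms(1)] by (intro integral_mono integrable_abs)
  also have "\<dots> = 2 powr e * ((1 + R) / \<epsilon> + 1) powr \<alpha> *
      ((\<integral>y. \<bar>u x\<bar> powr e * (1 / (1 + norm (y::'a)) powr \<alpha>) \<partial>lebesgue) + (\<integral>y. \<bar>u y\<bar> powr e / (1 + norm y) powr \<alpha> \<partial>lebesgue))"
    by (simp only: integral_mult_right_zero Bochner_Integration.integral_add[OF int1 tail])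
  also have "(\<integral>y. \<bar>u x\<bar> powr e * (1 / (1 + norm (y::'a)) powr \<alpha>) \<partial>lebesgue)
      = \<bar>u x\<bar> powr e * (\<integral>y. 1 / (1 + norm (y::'a)) powr \<alpha> \<partial>lebesgue)"
    by (rule integral_mult_right_zero)
  finally show ?thesis .
qed

lemma trunc_integral_diff_eq:
  assumes "0 < \<epsilon>'" "\<epsilon>' \<le> \<epsilon>"
  shows "trunc_integral e \<alpha> u \<epsilon>' x - trunc_integral e \<alpha> u \<epsilon> x
    = (\<integral>y. indicator (ball x \<epsilon> - ball x \<epsilon>') y * (spow (u x - u y) e / norm (x - y) powr \<alpha>) \<partial>lebesgue)"
proof -
  have "0 < \<epsilon>" using assms by linarith
  have "trunc_integral e \<alpha> u \<epsilon>' x - trunc_integral e \<alpha> u \<epsilon> x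
    = (\<integral>y. indicator (- ball x \<epsilon>') y * (spow (u x - u y) e / norm (x - y) powr \<alpha>)
        - indicator (- ball x \<epsilon>) y * (spow (u x - u y) e / norm (x - y) powr \<alpha>) \<partial>lebesgue)"
    unfolding trunc_integral_def
    by (rule Bochner_Integration.integral_diff[symmetric, OF trunc_kernel_integrable[OF assms(1)] trunc_kernel_integrable[OF \<open>0 < \<epsilon>\<close>]])
  also have "\<dots> = (\<integral>y. indicator (ball x \<epsilon> - ball x \<epsilon>') y * (spow (u x - u y) e / norm (x - y) powr \<alpha>) \<partial>lebesgue)"
    using assms by (intro Bochner_Integration.integral_cong) (auto simp: indicator_def)
  finally show ?thesis .
qed

lemma abs_trunc_integral_diff_le:
  assumes "0 < \<epsilon>'" "\<epsilon>' \<le> \<epsilon>" "E \<ge> 0" "I \<ge> 0"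
    and kernel: "\<And>h. 0 < norm h \<Longrightarrow> norm h \<le> \<epsilon> \<Longrightarrow>
      \<bar>spow (u x - u (x + h)) e + spow (u x - u (x - h)) e\<bar> \<le> E * norm h powr \<theta>"
    and radial: "(\<integral>\<^sup>+y. ennreal (indicator (ball x \<epsilon>) y * dist x y powr (\<theta> - \<alpha>)) \<partial>lebesgue) \<le> ennreal I"
  shows "2 * \<bar>trunc_integral e \<alpha> u \<epsilon>' x - trunc_integral e \<alpha> u \<epsilon> x\<bar> \<le> E * I"
proof -
  define G where "G y = indicator (ball x \<epsilon> - ball x \<epsilon>') y * (spow (u x - u y) e / norm (x - y) powr \<alpha>)" for y
  have "integrable lebesgue (\<lambda>y. indicator (- ball x \<epsilon>') y * (spow (u x - u y) e / norm (x - y) powr \<alpha>)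
      - indicator (- ball x \<epsilon>) y * (spow (u x - u y) e / norm (x - y) powr \<alpha>))"
    using trunc_kernel_integrable assms(1,2) by (intro Bochner_Integration.integrable_diff) (auto simp del: ball_eq_empty)
  also have "(\<lambda>y. indicator (- ball x \<epsilon>') y * (spow (u x - u y) e / norm (x - y) powr \<alpha>)
      - indicator (- ball x \<epsilon>) y * (spow (u x - u y) e / norm (x - y) powr \<alpha>)) = G"
    using assms(2) by (auto simp: G_def fun_eq_iff indicator_def)
  finally have G_integrable: "integrable lebesgue G" .
  have radial_measurable: "(\<lambda>y. ennreal (indicator (ball x \<epsilon>) y * dist x y powr (\<theta> - \<alpha>))) \<in> borel_measurable lebesgue"
  proof -
    have [measurable]: "(\<lambda>y. dist x y) \<in> borel_measurable borel" "ball x \<epsilon> \<in> sets borel"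
      by (auto intro: borel_measurable_continuous_onI continuous_intros)
    have "(\<lambda>y. ennreal (indicator (ball x \<epsilon>) y * dist x y powr (\<theta> - \<alpha>))) \<in> borel_measurable borel"
      by measurable
    then show ?thesis by (simp add: measurable_completion)
  qed
  have "ennreal \<bar>G y + G (x + x - y)\<bar> \<le> ennreal E * ennreal (indicator (ball x \<epsilon>) y * dist x y powr (\<theta> - \<alpha>))" for y
  proof -
    have "\<bar>G y + G (x + x - y)\<bar> \<le> E * (indicator (ball x \<epsilon>) y * dist x y powr (\<theta> - \<alpha>))"
      unfolding G_def by (rule abs_trunc_kernel_symmetrized_le[OF kernel assms(1,3)])
    then have "ennreal \<bar>G y + G (x + x - y)\<bar> \<le> ennreal (E * (indicator (ball x \<epsilon>) y * dist x y powr (\<theta> - \<alpha>)))"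
      by (rule ennreal_leI)
    with assms(3) show ?thesis by (simp add: ennreal_mult')
  qed
  then have "(\<integral>\<^sup>+y. ennreal \<bar>G y + G (x + x - y)\<bar> \<partial>lebesgue)
      \<le> (\<integral>\<^sup>+y. ennreal E * ennreal (indicator (ball x \<epsilon>) y * dist x y powr (\<theta> - \<alpha>)) \<partial>lebesgue)"
    by (intro nn_integral_mono)
  also have "\<dots> \<le> ennreal (E * I)"
    using nn_integral_cmult[OF radial_measurable, of E] mult_left_mono[OF radial, of "ennreal E"] assms(3)
    by (simp add: ennreal_mult')
  finally have "(\<integral>y. \<bar>G y + G (x + x - y)\<bar> \<partial>lebesgue) \<le> E * I"
    using assms(3,4) by (intro integral_real_bounded) auto
  moreover have "2 * \<bar>\<integral>y. G y \<partial>lebesgue\<bar> \<le> (\<integral>y. \<bar>G y + G (x + x - y)\<bar> \<partial>lebesgue)"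
    using integral_abs_bound[of lebesgue "\<lambda>y. G y + G (x + x - y)"]
      integral_add_point_reflection[OF G_integrable, of "x + x"] by simp
  ultimately show ?thesis
    using trunc_integral_diff_eq[OF assms(1,2), of x] by (simp add: G_def)
qed

lemma trunc_integral_uniformly_Cauchy:
  assumes "in_C1gamma_loc \<gamma> \<Omega> u" "open \<Omega>" "compact K" "K \<subseteq> \<Omega>" "\<gamma> \<ge> 0"
    and \<tau>: "\<tau> = second_difference_order e \<gamma> - \<alpha> + DIM('a)" "\<tau> > 0"
  shows "\<exists>\<delta>>0. \<exists>B\<ge>0. \<forall>x\<in>K. \<forall>\<epsilon>' \<epsilon>. 0 < \<epsilon>' \<longrightarrow> \<epsilon>' \<le> \<epsilon> \<longrightarrow> \<epsilon> \<le> \<delta> \<longrightarrow>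
    \<bar>trunc_integral e \<alpha> u \<epsilon>' x - trunc_integral e \<alpha> u \<epsilon> x\<bar> \<le> B * \<epsilon> powr \<tau>"
proof -
  obtain \<delta> E where \<delta>: "\<delta> > 0" and E: "E \<ge> 0" and kernel: "\<And>x h. x \<in> K \<Longrightarrow> 0 < norm h \<Longrightarrow> norm h \<le> \<delta> \<Longrightarrow>
      \<bar>spow (u x - u (x + h)) e + spow (u x - u (x - h)) e\<bar> \<le> E * norm h powr second_difference_order e \<gamma>"
    using in_C1gamma_loc_second_difference_le[OF assms(1-5) e] by blast
  obtain C where C: "C \<ge> 0" and radial: "\<And>(x::'a) \<epsilon>. \<epsilon> > 0 \<Longrightarrow>
      (\<integral>\<^sup>+y. ennreal (indicator (ball x \<epsilon>) y * dist x y powr (\<tau> - DIM('a))) \<partial>lebesgue) \<le> ennreal (C * \<epsilon> powr \<tau>)"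
    using nn_integral_dist_powr_ball_le[OF \<tau>(2)] by blast
  have order: "second_difference_order e \<gamma> - \<alpha> = \<tau> - DIM('a)" using \<tau>(1) by simp
  have "\<bar>trunc_integral e \<alpha> u \<epsilon>' x - trunc_integral e \<alpha> u \<epsilon> x\<bar> \<le> (E * C) * \<epsilon> powr \<tau>"
    if "x \<in> K" "0 < \<epsilon>'" "\<epsilon>' \<le> \<epsilon>" "\<epsilon> \<le> \<delta>" for x \<epsilon>' \<epsilon>
  proof -
    have "2 * \<bar>trunc_integral e \<alpha> u \<epsilon>' x - trunc_integral e \<alpha> u \<epsilon> x\<bar> \<le> E * (C * \<epsilon> powr \<tau>)"
    proof (rule abs_trunc_integral_diff_le)
      show "\<bar>spow (u x - u (x + h)) e + spow (u x - u (x - h)) e\<bar> \<le> E * norm h powr second_difference_order e \<gamma>"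
        if "0 < norm h" "norm h \<le> \<epsilon>" for h
        using kernel[OF \<open>x \<in> K\<close> that(1)] that \<open>\<epsilon> \<le> \<delta>\<close> by simp
      show "(\<integral>\<^sup>+y. ennreal (indicator (ball x \<epsilon>) y * dist x y powr (second_difference_order e \<gamma> - \<alpha>)) \<partial>lebesgue)
          \<le> ennreal (C * \<epsilon> powr \<tau>)"
        unfolding order using radial that(2,3) by simp
    qed (use that E C in auto)
    moreover have "0 \<le> E * (C * \<epsilon> powr \<tau>)" using E C by simp
    ultimately show ?thesis by (simp add: mult.assoc)
  qed
  moreover have "0 \<le> E * C" using E C by simp
  ultimately show ?thesis using \<delta> by blast
qed

lemma trunc_integral_bounded_on_compact:
  assumes "compact K" "continuous_on K u" "\<delta> > 0"
  shows "\<exists>T. \<forall>x\<in>K. \<bar>trunc_integral e \<alpha> u \<delta> x\<bar> \<le> T"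
proof -
  obtain R where R: "\<And>x. x \<in> K \<Longrightarrow> norm x \<le> R"
    using compact_imp_bounded[OF assms(1)] by (auto simp: bounded_iff)
  obtain U where U: "\<And>x. x \<in> K \<Longrightarrow> norm (u x) \<le> U"
    using continuous_on_compact_bound[OF assms(1,2)] by blast
  define I where "I = (\<integral>y. 1 / (1 + norm (y::'a)) powr \<alpha> \<partial>lebesgue)"
  have "I \<ge> 0" unfolding I_def by (rule Bochner_Integration.integral_nonneg) simp
  have "\<bar>trunc_integral e \<alpha> u \<delta> x\<bar> \<le> 2 powr e * ((1 + R) / \<delta> + 1) powr \<alpha> *
      (U powr e * I + (\<integral>y. \<bar>u y\<bar> powr e / (1 + norm y) powr \<alpha> \<partial>lebesgue))" if "x \<in> K" for x
  proof -
    have "\<bar>trunc_integral e \<alpha> u \<delta> x\<bar> \<le> 2 powr e * ((1 + R) / \<delta> + 1) powr \<alpha> *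
        (\<bar>u x\<bar> powr e * I + (\<integral>y. \<bar>u y\<bar> powr e / (1 + norm y) powr \<alpha> \<partial>lebesgue))"
      unfolding I_def by (rule abs_trunc_integral_le[OF assms(3) R[OF that]])
    also have "\<dots> \<le> 2 powr e * ((1 + R) / \<delta> + 1) powr \<alpha> *
        (U powr e * I + (\<integral>y. \<bar>u y\<bar> powr e / (1 + norm y) powr \<alpha> \<partial>lebesgue))"
      using U[OF that] e \<open>I \<ge> 0\<close> by (intro mult_left_mono add_right_mono mult_right_mono powr_mono2) auto
    finally show ?thesis .
  qed
  then show ?thesis by blast
qed

end

section \<open>Uniform convergence of the truncated operator\<close>

lemma p_s_lt_second_difference_order:
  fixes p s \<gamma> :: real
  assumes "1 < p"
    and "p \<ge> 2 \<longrightarrow> \<gamma> > 1 - p * (1 - s)"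
    and "p < 2 \<longrightarrow> \<gamma> > (1 - p * (1 - s)) / (p - 1)"
  shows "p * s < second_difference_order (p - 1) \<gamma>"
proof (cases "p \<ge> 2")
  case True
  then show ?thesis using assms by (simp add: second_difference_order_def algebra_simps)
next
  case False
  then have "(p - 1) * \<gamma> > 1 - p * (1 - s)" using assms by (simp add: field_simps)
  then show ?thesis using False by (simp add: second_difference_order_def algebra_simps)
qed

lemma in_tWsp_measurable: "in_tWsp s p \<Omega> u \<Longrightarrow> u \<in> borel_measurable lebesgue"
  by (simp add: in_tWsp_def in_Lp_loc_def)

lemma in_tWsp_tail_integrable:
  fixes u :: "'a::euclidean_space \<Rightarrow> real" and s p :: real
  assumes "in_tWsp s p \<Omega> u"
  shows "integrable lebesgue (\<lambda>y. \<bar>u y\<bar> powr (p - 1) / (1 + norm y) powr (DIM('a) + p * s))"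
proof (rule integrableI_bounded)
  have [measurable]: "u \<in> borel_measurable lebesgue" using assms by (rule in_tWsp_measurable)
  show "(\<lambda>y. \<bar>u y\<bar> powr (p - 1) / (1 + norm y) powr (DIM('a) + p * s)) \<in> borel_measurable lebesgue"
    by measurable
  have "ennreal (norm (\<bar>u y\<bar> powr (p - 1) / (1 + norm y) powr (DIM('a) + p * s)))
      = ennreal (\<bar>u y\<bar> powr (p - 1) / (1 + norm y) powr (DIM('a) + p * s))" for y :: 'a
    by (simp add: add_pos_nonneg)
  then show "(\<integral>\<^sup>+y. ennreal (norm (\<bar>u y\<bar> powr (p - 1) / (1 + norm y) powr (DIM('a) + p * s))) \<partial>lebesgue) < \<infinity>"
    using assms by (simp add: in_tWsp_def)
qed

lemma frac_trunc_measurable: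
  fixes u :: "'a::euclidean_space \<Rightarrow> real" and s p :: real
  assumes "u \<in> borel_measurable lebesgue"
  shows "frac_trunc s p u \<epsilon> \<in> borel_measurable lebesgue"
proof -
  have "frac_trunc s p u \<epsilon> = (\<lambda>x. 2 * trunc_integral (p - 1) (DIM('a) + p * s) u \<epsilon> x)"
    by (simp add: fun_eq_iff frac_trunc_eq_trunc_integral)
  then show ?thesis using trunc_integral_measurable[OF assms] by simp
qed

lemma in_C1gamma_loc_continuous_on: "in_C1gamma_loc \<gamma> \<Omega> u \<Longrightarrow> continuous_on \<Omega> u"
  unfolding in_C1gamma_loc_def
  by (meson continuous_at_imp_continuous_on has_derivative_continuous)

context
  fixes s p \<gamma> :: real and \<Omega> :: "'a::euclidean_space set" and u :: "'a \<Rightarrow> real"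
  assumes s: "0 < s" and p: "1 < p" and \<gamma>: "0 \<le> \<gamma>" and \<Omega>: "open \<Omega>"
    and u: "in_tWsp s p \<Omega> u" "in_C1gamma_loc \<gamma> \<Omega> u"
begin

lemma frac_trunc_uniformly_Cauchy:
  assumes "compact K" "K \<subseteq> \<Omega>"
    and \<tau>: "\<tau> = second_difference_order (p - 1) \<gamma> - p * s" "\<tau> > 0"
  shows "\<exists>\<delta>>0. \<exists>B\<ge>0. \<forall>x\<in>K. \<forall>\<epsilon>' \<epsilon>. 0 < \<epsilon>' \<longrightarrow> \<epsilon>' \<le> \<epsilon> \<longrightarrow> \<epsilon> \<le> \<delta> \<longrightarrow>
    \<bar>frac_trunc s p u \<epsilon>' x - frac_trunc s p u \<epsilon> x\<bar> \<le> B * \<epsilon> powr \<tau>"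
proof -
  have \<alpha>: "DIM('a) < DIM('a) + p * s" and e: "p - 1 > 0" using s p by simp_all
  have "\<tau> = second_difference_order (p - 1) \<gamma> - (DIM('a) + p * s) + DIM('a)" using \<tau>(1) by simp
  from trunc_integral_uniformly_Cauchy[OF in_tWsp_measurable[OF u(1)] in_tWsp_tail_integrable[OF u(1)]
      \<alpha> e u(2) \<Omega> assms(1,2) \<gamma> this \<tau>(2)]
  obtain \<delta> B where "\<delta> > 0" "B \<ge> 0" and Cauchy: "\<forall>x\<in>K. \<forall>\<epsilon>' \<epsilon>. 0 < \<epsilon>' \<longrightarrow> \<epsilon>' \<le> \<epsilon> \<longrightarrow> \<epsilon> \<le> \<delta> \<longrightarrow>
      \<bar>trunc_integral (p - 1) (DIM('a) + p * s) u \<epsilon>' x - trunc_integral (p - 1) (DIM('a) + p * s) u \<epsilon> x\<bar>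
        \<le> B * \<epsilon> powr \<tau>"
    by blast
  have "\<bar>frac_trunc s p u \<epsilon>' x - frac_trunc s p u \<epsilon> x\<bar> \<le> (2 * B) * \<epsilon> powr \<tau>"
    if "x \<in> K" "0 < \<epsilon>'" "\<epsilon>' \<le> \<epsilon>" "\<epsilon> \<le> \<delta>" for x \<epsilon>' \<epsilon>
  proof -
    have "frac_trunc s p u \<epsilon>' x - frac_trunc s p u \<epsilon> x
        = 2 * (trunc_integral (p - 1) (DIM('a) + p * s) u \<epsilon>' x - trunc_integral (p - 1) (DIM('a) + p * s) u \<epsilon> x)"
      by (simp only: frac_trunc_eq_trunc_integral right_diff_distrib)
    then have "\<bar>frac_trunc s p u \<epsilon>' x - frac_trunc s p u \<epsilon> x\<bar>
        = 2 * \<bar>trunc_integral (p - 1) (DIM('a) + p * s) u \<epsilon>' x - trunc_integral (p - 1) (DIM('a) + p * s) u \<epsilon> x\<bar>"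
      by (simp only: abs_mult abs_numeral)
    also have "\<dots> \<le> 2 * (B * \<epsilon> powr \<tau>)" using Cauchy that by simp
    finally show ?thesis by simp
  qed
  with \<open>\<delta> > 0\<close> \<open>B \<ge> 0\<close> show ?thesis
    by (intro exI[of _ \<delta>] exI[of _ "2 * B"] conjI ballI allI impI) auto
qed

lemma frac_trunc_bounded_on_compact:
  assumes "compact K" "K \<subseteq> \<Omega>" "\<delta> > 0"
  shows "\<exists>T. \<forall>x\<in>K. \<bar>frac_trunc s p u \<delta> x\<bar> \<le> T"
proof -
  have \<alpha>: "DIM('a) < DIM('a) + p * s" and e: "p - 1 > 0" using s p by simp_all
  obtain T where "\<forall>x\<in>K. \<bar>trunc_integral (p - 1) (DIM('a) + p * s) u \<delta> x\<bar> \<le> T"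
    using trunc_integral_bounded_on_compact[OF in_tWsp_measurable[OF u(1)] in_tWsp_tail_integrable[OF u(1)]
      \<alpha> e assms(1) continuous_on_subset[OF in_C1gamma_loc_continuous_on[OF u(2)] assms(2)] assms(3)]
    by blast
  then have "\<bar>frac_trunc s p u \<delta> x\<bar> \<le> 2 * T" if "x \<in> K" for x
    using that by (simp only: frac_trunc_eq_trunc_integral abs_mult abs_numeral) simp
  then show ?thesis by blast
qed

end

section \<open>Limits with a uniform rate\<close>

context
  fixes F :: "real \<Rightarrow> real" and \<delta> \<tau> B :: real
  assumes \<delta>: "\<delta> > 0" and \<tau>: "\<tau> > 0"
    and Cauchy: "\<And>\<epsilon>' \<epsilon>. 0 < \<epsilon>' \<Longrightarrow> \<epsilon>' \<le> \<epsilon> \<Longrightarrow> \<epsilon> \<le> \<delta> \<Longrightarrow> \<bar>F \<epsilon>' - F \<epsilon>\<bar> \<le> B * \<epsilon> powr \<tau>"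
begin

lemma Cauchy_rate_convergent: "convergent (\<lambda>n. F (1 / Suc n))"
proof -
  have r0: "(\<lambda>n. 1 / real (Suc n)) \<longlonglongrightarrow> 0"
    using LIMSEQ_inverse_real_of_nat by (simp add: inverse_eq_divide)
  have "(\<lambda>n. B * (1 / real (Suc n)) powr \<tau>) \<longlonglongrightarrow> 0"
    by (rule tendsto_mult_right_zero, rule tendsto_zero_powrI[OF r0 tendsto_const]) (use \<tau> in auto)
  have "Cauchy (\<lambda>n. F (1 / Suc n))"
  proof (rule CauchyI)
    fix r :: real assume "r > 0"
    have "eventually (\<lambda>n. B * (1 / real (Suc n)) powr \<tau> < r \<and> 1 / real (Suc n) < \<delta>) sequentially"
      using order_tendstoD(2)[OF \<open>(\<lambda>n. B * _) \<longlonglongrightarrow> 0\<close> \<open>r > 0\<close>] order_tendstoD(2)[OF r0 \<delta>]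
      by eventually_elim auto
    then obtain M where M: "\<And>n. n \<ge> M \<Longrightarrow> B * (1 / real (Suc n)) powr \<tau> < r \<and> 1 / real (Suc n) < \<delta>"
      by (auto simp: eventually_sequentially)
    have close: "\<bar>F (1 / Suc m) - F (1 / Suc n)\<bar> < r" if "n \<le> m" "n \<ge> M" for m n
    proof -
      have "1 / real (Suc m) \<le> 1 / real (Suc n)" using that by (simp add: frac_le)
      then have "\<bar>F (1 / Suc m) - F (1 / Suc n)\<bar> \<le> B * (1 / real (Suc n)) powr \<tau>"
        using M[OF that(2)] by (intro Cauchy) auto
      then show ?thesis using M[OF that(2)] by linarith
    qed
    have "norm (F (1 / Suc m) - F (1 / Suc n)) < r" if "m \<ge> M" "n \<ge> M" for m n
      using close[of n m] close[of m n] that by (cases "n \<le> m") (auto simp: abs_minus_commute)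
    then show "\<exists>M. \<forall>m\<ge>M. \<forall>n\<ge>M. norm (F (1 / Suc m) - F (1 / Suc n)) < r" by blast
  qed
  then show ?thesis by (simp add: Cauchy_convergent_iff)
qed

lemma Cauchy_rate_abs_diff_lim_le:
  assumes "0 < \<epsilon>" "\<epsilon> \<le> \<delta>"
  shows "\<bar>F \<epsilon> - lim (\<lambda>n. F (1 / Suc n))\<bar> \<le> B * \<epsilon> powr \<tau>"
proof (rule LIMSEQ_le_const2)
  show "(\<lambda>n. \<bar>F \<epsilon> - F (1 / Suc n)\<bar>) \<longlonglongrightarrow> \<bar>F \<epsilon> - lim (\<lambda>n. F (1 / Suc n))\<bar>"
    using Cauchy_rate_convergent by (intro tendsto_intros) (simp add: convergent_LIMSEQ_iff)
  have "(\<lambda>n. 1 / real (Suc n)) \<longlonglongrightarrow> 0"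
    using LIMSEQ_inverse_real_of_nat by (simp add: inverse_eq_divide)
  from order_tendstoD(2)[OF this assms(1)]
  obtain N where N: "\<And>n. n \<ge> N \<Longrightarrow> 1 / real (Suc n) < \<epsilon>"
    by (auto simp: eventually_sequentially)
  have "\<bar>F \<epsilon> - F (1 / Suc n)\<bar> \<le> B * \<epsilon> powr \<tau>" if "n \<ge> N" for n
    using Cauchy[of "1 / real (Suc n)" \<epsilon>] N[OF that] assms by (simp add: abs_minus_commute)
  then show "\<exists>N. \<forall>n\<ge>N. \<bar>F \<epsilon> - F (1 / Suc n)\<bar> \<le> B * \<epsilon> powr \<tau>" by blast
qed

end

lemma uniform_rate_limit_exists:
  fixes F :: "real \<Rightarrow> 'a::euclidean_space \<Rightarrow> real"
  assumes measurable: "\<And>\<epsilon>. F \<epsilon> \<in> borel_measurable lebesgue" and "\<Omega> \<in> sets lebesgue" "\<tau> > 0"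
    and Cauchy: "\<And>K. compact K \<Longrightarrow> K \<subseteq> \<Omega> \<Longrightarrow> \<exists>\<delta>>0. \<exists>B\<ge>0. \<forall>x\<in>K. \<forall>\<epsilon>' \<epsilon>.
      0 < \<epsilon>' \<longrightarrow> \<epsilon>' \<le> \<epsilon> \<longrightarrow> \<epsilon> \<le> \<delta> \<longrightarrow> \<bar>F \<epsilon>' x - F \<epsilon> x\<bar> \<le> B * \<epsilon> powr \<tau>"
  shows "\<exists>f. f \<in> borel_measurable lebesgue \<and> (\<forall>K. compact K \<and> K \<subseteq> \<Omega> \<longrightarrow>
    (\<exists>\<delta>>0. \<exists>B\<ge>0. \<forall>x\<in>K. \<forall>\<epsilon>. 0 < \<epsilon> \<and> \<epsilon> \<le> \<delta> \<longrightarrow> \<bar>F \<epsilon> x - f x\<bar> \<le> B * \<epsilon> powr \<tau>))"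
proof -
  define f where "f x = indicator \<Omega> x * lim (\<lambda>n. F (1 / Suc n) x)" for x
  have "(\<lambda>x. lim (\<lambda>n. F (1 / Suc n) x)) \<in> borel_measurable lebesgue"
    by (rule borel_measurable_lim_metric) (rule measurable)
  then have measurable_f: "f \<in> borel_measurable lebesgue"
    unfolding f_def[abs_def] using assms(2) by measurable
  have "\<exists>\<delta>>0. \<exists>B\<ge>0. \<forall>x\<in>K. \<forall>\<epsilon>. 0 < \<epsilon> \<and> \<epsilon> \<le> \<delta> \<longrightarrow> \<bar>F \<epsilon> x - f x\<bar> \<le> B * \<epsilon> powr \<tau>"
    if K: "compact K \<and> K \<subseteq> \<Omega>" for K
  proof -
    from K have "\<exists>\<delta>>0. \<exists>B\<ge>0. \<forall>x\<in>K. \<forall>\<epsilon>' \<epsilon>.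
        0 < \<epsilon>' \<longrightarrow> \<epsilon>' \<le> \<epsilon> \<longrightarrow> \<epsilon> \<le> \<delta> \<longrightarrow> \<bar>F \<epsilon>' x - F \<epsilon> x\<bar> \<le> B * \<epsilon> powr \<tau>"
      by (intro Cauchy) auto
    then obtain \<delta> B where "\<delta> > 0" "B \<ge> 0" and est: "\<forall>x\<in>K. \<forall>\<epsilon>' \<epsilon>.
        0 < \<epsilon>' \<longrightarrow> \<epsilon>' \<le> \<epsilon> \<longrightarrow> \<epsilon> \<le> \<delta> \<longrightarrow> \<bar>F \<epsilon>' x - F \<epsilon> x\<bar> \<le> B * \<epsilon> powr \<tau>"
      by blast
    have "\<bar>F \<epsilon> x - f x\<bar> \<le> B * \<epsilon> powr \<tau>" if "x \<in> K" "0 < \<epsilon>" "\<epsilon> \<le> \<delta>" for x \<epsilon>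
    proof -
      have "f x = lim (\<lambda>n. F (1 / Suc n) x)" using K that(1) by (auto simp: f_def)
      moreover have "\<And>\<epsilon>' \<epsilon>. 0 < \<epsilon>' \<Longrightarrow> \<epsilon>' \<le> \<epsilon> \<Longrightarrow> \<epsilon> \<le> \<delta> \<Longrightarrow> \<bar>F \<epsilon>' x - F \<epsilon> x\<bar> \<le> B * \<epsilon> powr \<tau>"
        using est that(1) by blast
      ultimately show ?thesis
        using Cauchy_rate_abs_diff_lim_le[of \<delta> \<tau> "\<lambda>\<epsilon>. F \<epsilon> x" B \<epsilon>] \<open>\<delta> > 0\<close> \<open>\<tau> > 0\<close> that(2,3) by simp
  qed
    with \<open>\<delta> > 0\<close> \<open>B \<ge> 0\<close> show ?thesis by blast
  qed
  with measurable_f show ?thesis by blast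
qed

lemma in_Linf_loc_of_uniform_rate:
  fixes F :: "real \<Rightarrow> 'a::euclidean_space \<Rightarrow> real"
  assumes "f \<in> borel_measurable lebesgue" "\<Omega> \<in> sets lebesgue"
    and rate: "\<forall>K. compact K \<and> K \<subseteq> \<Omega> \<longrightarrow>
      (\<exists>\<delta>>0. \<exists>B\<ge>0. \<forall>x\<in>K. \<forall>\<epsilon>. 0 < \<epsilon> \<and> \<epsilon> \<le> \<delta> \<longrightarrow> \<bar>F \<epsilon> x - f x\<bar> \<le> B * \<epsilon> powr \<tau>)"
    and bounded: "\<And>K \<delta>. compact K \<Longrightarrow> K \<subseteq> \<Omega> \<Longrightarrow> \<delta> > 0 \<Longrightarrow> \<exists>T. \<forall>x\<in>K. \<bar>F \<delta> x\<bar> \<le> T"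
  shows "in_Linf_loc \<Omega> f"
  unfolding in_Linf_loc_def
proof (intro conjI allI impI)
  show "set_borel_measurable lebesgue \<Omega> f"
    using assms(1,2) unfolding set_borel_measurable_def by measurable
  fix K assume K: "compact K \<and> K \<subseteq> \<Omega>"
  from rate[rule_format, OF K]
  obtain \<delta> B where "\<delta> > 0" and approx: "\<forall>x\<in>K. \<forall>\<epsilon>. 0 < \<epsilon> \<and> \<epsilon> \<le> \<delta> \<longrightarrow> \<bar>F \<epsilon> x - f x\<bar> \<le> B * \<epsilon> powr \<tau>"
    by blast
  moreover obtain T where "\<forall>x\<in>K. \<bar>F \<delta> x\<bar> \<le> T" using bounded K \<open>\<delta> > 0\<close> by blast
  ultimately have "\<bar>f x\<bar> \<le> T + B * \<delta> powr \<tau>" if "x \<in> K" for x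
    using that by fastforce
  then show "\<exists>C. AE x in lebesgue. x \<in> K \<longrightarrow> \<bar>f x\<bar> \<le> C"
    by (intro exI AE_I2) auto
qed

lemma integrable_mult_indicator_compact:
  fixes K :: "'a::euclidean_space set"
  assumes "compact K"
  shows "integrable lebesgue (\<lambda>x. c * indicator K x :: real)"
proof -
  have "K \<in> sets lebesgue" "emeasure lebesgue K < \<infinity>"
    using lmeasurable_compact[OF assms] by (auto simp: fmeasurable_def)
  then have "integrable lebesgue (indicator K :: 'a \<Rightarrow> real)" by (simp add: integrable_indicator_iff)
  then show ?thesis by simp
qed

lemma eventually_at_right_zero_le:
  fixes \<delta> :: real
  assumes "\<delta> > 0"
  shows "\<forall>\<^sub>F \<epsilon> in at_right 0. 0 < \<epsilon> \<and> \<epsilon> \<le> \<delta>"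
proof -
  have "\<forall>\<^sub>F \<epsilon> in at_right 0. \<epsilon> < \<delta>"
    using order_tendstoD(2)[OF tendsto_ident_at assms] .
  then show ?thesis using eventually_at_right_less[of "0::real"] by eventually_elim auto
qed

context
  fixes F :: "real \<Rightarrow> 'a::euclidean_space \<Rightarrow> real" and f :: "'a \<Rightarrow> real" and K :: "'a set" and \<delta> B \<tau> :: real
  assumes K: "compact K"
    and measurable: "\<And>\<epsilon>. F \<epsilon> \<in> borel_measurable lebesgue" "f \<in> borel_measurable lebesgue"
    and \<delta>: "\<delta> > 0" and B: "B \<ge> 0" and \<tau>: "\<tau> > 0"
    and rate: "\<forall>x\<in>K. \<forall>\<epsilon>. 0 < \<epsilon> \<and> \<epsilon> \<le> \<delta> \<longrightarrow> \<bar>F \<epsilon> x - f x\<bar> \<le> B * \<epsilon> powr \<tau>"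
begin

lemma indicator_abs_diff_le_rate:
  assumes "0 < \<epsilon>" "\<epsilon> \<le> \<delta>"
  shows "\<bar>indicator K x * (F \<epsilon> x - f x)\<bar> \<le> B * \<epsilon> powr \<tau> * indicator K x"
  using rate assms by (cases "x \<in> K") (simp_all add: indicator_def)

lemma integrable_indicator_diff_of_rate:
  assumes "0 < \<epsilon>" "\<epsilon> \<le> \<delta>"
  shows "integrable lebesgue (\<lambda>x. indicator K x * (F \<epsilon> x - f x))"
proof (rule Bochner_Integration.integrable_bound[OF integrable_mult_indicator_compact[OF K]])
  have "K \<in> sets lebesgue" using lmeasurable_compact[OF K] by (simp add: fmeasurable_def)
  then show "(\<lambda>x. indicator K x * (F \<epsilon> x - f x)) \<in> borel_measurable lebesgue"
    using measurable by measurable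
  show "AE x in lebesgue. norm (indicator K x * (F \<epsilon> x - f x)) \<le> norm (B * \<epsilon> powr \<tau> * indicator K x)"
    using indicator_abs_diff_le_rate[OF assms] B by (intro AE_I2) (simp add: abs_mult)
qed

lemma eventually_set_integrable_diff_of_rate:
  "\<forall>\<^sub>F \<epsilon> in at_right 0. set_integrable lebesgue K (\<lambda>x. F \<epsilon> x - f x)"
  using eventually_at_right_zero_le[OF \<delta>]
  by eventually_elim (simp add: set_integrable_def integrable_indicator_diff_of_rate)

lemma integral_abs_diff_tendsto_zero_of_rate:
  "((\<lambda>\<epsilon>. \<integral>x. indicator K x * \<bar>F \<epsilon> x - f x\<bar> \<partial>lebesgue) \<longlongrightarrow> 0) (at_right 0)"
proof (rule tendsto_sandwich)
  show "\<forall>\<^sub>F \<epsilon> in at_right 0. 0 \<le> (\<integral>x. indicator K x * \<bar>F \<epsilon> x - f x\<bar> \<partial>lebesgue)"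
    by (intro always_eventually allI) simp
  show "\<forall>\<^sub>F \<epsilon> in at_right 0. (\<integral>x. indicator K x * \<bar>F \<epsilon> x - f x\<bar> \<partial>lebesgue) \<le> B * \<epsilon> powr \<tau> * measure lebesgue K"
    using eventually_at_right_zero_le[OF \<delta>]
  proof eventually_elim
    case (elim \<epsilon>)
    have "integrable lebesgue (\<lambda>x. indicator K x * \<bar>F \<epsilon> x - f x\<bar>)"
      using integrable_abs[OF integrable_indicator_diff_of_rate[of \<epsilon>]] elim by (simp add: abs_mult)
    then have "(\<integral>x. indicator K x * \<bar>F \<epsilon> x - f x\<bar> \<partial>lebesgue) \<le> (\<integral>x. B * \<epsilon> powr \<tau> * indicator K x \<partial>lebesgue)"
      using integrable_mult_indicator_compact[OF K] elim indicator_abs_diff_le_rate[of \<epsilon>]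
      by (intro integral_mono) (auto simp: abs_mult)
    also have "\<dots> = B * \<epsilon> powr \<tau> * measure lebesgue K" by simp
    finally show ?case .
  qed
  have "((\<lambda>\<epsilon>::real. \<epsilon> powr \<tau>) \<longlongrightarrow> 0) (at_right 0)"
    by (rule tendsto_zero_powrI[OF tendsto_ident_at tendsto_const])
      (use eventually_at_right_less[of "0::real"] \<tau> in \<open>auto elim: eventually_mono\<close>)
  then show "((\<lambda>\<epsilon>::real. B * \<epsilon> powr \<tau> * measure lebesgue K) \<longlongrightarrow> 0) (at_right 0)"
    by (intro tendsto_mult_left_zero tendsto_mult_right_zero)
qed simp

end

lemma strong_solution_of_uniform_rate:
  fixes u f :: "'a::euclidean_space \<Rightarrow> real"
  assumes "f \<in> borel_measurable lebesgue" "\<tau> > 0" "\<And>\<epsilon>. frac_trunc s p u \<epsilon> \<in> borel_measurable lebesgue"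
    and rate: "\<forall>K. compact K \<and> K \<subseteq> \<Omega> \<longrightarrow>
      (\<exists>\<delta>>0. \<exists>B\<ge>0. \<forall>x\<in>K. \<forall>\<epsilon>. 0 < \<epsilon> \<and> \<epsilon> \<le> \<delta> \<longrightarrow> \<bar>frac_trunc s p u \<epsilon> x - f x\<bar> \<le> B * \<epsilon> powr \<tau>)"
  shows "strong_solution s p \<Omega> u f"
  unfolding strong_solution_def
proof (intro allI impI)
  fix K assume K: "compact K \<and> K \<subseteq> \<Omega>"
  from rate[rule_format, OF K]
  obtain \<delta> B where "\<delta> > 0" "B \<ge> 0"
    and "\<forall>x\<in>K. \<forall>\<epsilon>. 0 < \<epsilon> \<and> \<epsilon> \<le> \<delta> \<longrightarrow> \<bar>frac_trunc s p u \<epsilon> x - f x\<bar> \<le> B * \<epsilon> powr \<tau>"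
    by blast
  note rate_K = conjunct1[OF K] assms(3,1) this(1,2) assms(2) this(3)
  show "(\<forall>\<^sub>F \<epsilon> in at_right 0. set_integrable lebesgue K (\<lambda>x. frac_trunc s p u \<epsilon> x - f x)) \<and>
      ((\<lambda>\<epsilon>. \<integral>x. indicator K x * \<bar>frac_trunc s p u \<epsilon> x - f x\<bar> \<partial>lebesgue) \<longlongrightarrow> 0) (at_right 0)"
    using eventually_set_integrable_diff_of_rate[OF rate_K] integral_abs_diff_tendsto_zero_of_rate[OF rate_K] ..
qed

theorem proposition2p12:
  fixes s p \<gamma> :: real and \<Omega> :: "'a::euclidean_space set" and u :: "'a \<Rightarrow> real"
  assumes "0 < s" "s < 1" "1 < p"
    and "bounded \<Omega>" "open \<Omega>"
    and "in_tWsp s p \<Omega> u" "in_C1gamma_loc \<gamma> \<Omega> u"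
    and "0 \<le> \<gamma>" "\<gamma> \<le> 1"
    and "p \<ge> 2 \<longrightarrow> \<gamma> > 1 - p * (1 - s)"
    and "p < 2 \<longrightarrow> \<gamma> > (1 - p * (1 - s)) / (p - 1)"
  shows "\<exists>f. in_Linf_loc \<Omega> f \<and> strong_solution s p \<Omega> u f"
proof -
  define \<tau> where "\<tau> = second_difference_order (p - 1) \<gamma> - p * s"
  have \<tau>: "\<tau> > 0" using p_s_lt_second_difference_order[OF assms(3,10,11)] by (simp add: \<tau>_def)
  have \<Omega>: "\<Omega> \<in> sets lebesgue" using \<open>open \<Omega>\<close> by simp
  note measurable = frac_trunc_measurable[OF in_tWsp_measurable[OF assms(6)]]
  note Cauchy = frac_trunc_uniformly_Cauchy[OF assms(1,3,8,5,6,7) _ _ \<tau>_def \<tau>]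
  obtain f where f: "f \<in> borel_measurable lebesgue" and rate: "\<forall>K. compact K \<and> K \<subseteq> \<Omega> \<longrightarrow>
      (\<exists>\<delta>>0. \<exists>B\<ge>0. \<forall>x\<in>K. \<forall>\<epsilon>. 0 < \<epsilon> \<and> \<epsilon> \<le> \<delta> \<longrightarrow> \<bar>frac_trunc s p u \<epsilon> x - f x\<bar> \<le> B * \<epsilon> powr \<tau>)"
    using uniform_rate_limit_exists[OF measurable \<Omega> \<tau> Cauchy] by blast
  have "in_Linf_loc \<Omega> f"
    by (rule in_Linf_loc_of_uniform_rate[OF f \<Omega> rate frac_trunc_bounded_on_compact[OF assms(1,3,8,5,6,7)]])
  moreover have "strong_solution s p \<Omega> u f"
    by (rule strong_solution_of_uniform_rate[OF f \<tau> measurable rate])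
  ultimately show ?thesis by blast
qed

end
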